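(* For all $1\leqslant p,q\leqslant\infty$, $0<\theta<1$, and $-2\leqslant s_0<s_1\leqslant2$, with $s=(1-\theta)s_0+\theta s_1$, the following hold with equivalent norms: $$B^qL^p(\Omega;\dot H^s(\mathcal O))=\big(L^p(\Omega;\dot H^{s_0}(\mathcal O)),L^p(\Omega;\dot H^{s_1}(\mathcal O))\big)_{\theta,q},$$ $$\big(B^\infty L^p(\Omega;\dot H^{s_0}(\mathcal O)),B^\infty L^p(\Omega;\dot H^{s_1}(\mathcal O))\big)_{\theta,q}=B^qL^p(\Omega;\dot H^s(\mathcal O)).$$
   Context: $\mathcal O\subset\mathbb R^d$ bounded domain; $A=-\Delta$ the Dirichlet Laplacian with $L^2$-orthonormal eigenfunctions $\phi_k$ and eigenvalues $0<\lambda_1\leqslant\lambda_2\leqslant\cdots$ (satisfying Weyl's asymptotics $\lambda_k\sim k^{2/d}$). For $s\in[-2,2]$, $\dot H^s(\mathcal O)=\{v=\sum v_k\phi_k:\|v\|^2_{\dot H^s}=\sum\lambda_k^sv_k^2<\infty\}$. $(\Omega,\mathcal F,\mathbb P)$ is a probability space and $L^p(\Omega;X)$ the Bochner space. For $j\geqslant1$, $\Pi_jv=\sum_{k=2^{j-1}}^{2^j-1}(v,\phi_k)\phi_k$. For $1\leqslant p,q\leqslant\infty$, $s\in[-2,2]$, $B^qL^p(\Omega;\dot H^s(\mathcal O))$ is the space of $v\in L^p(\Omega;\dot H^{-2}(\mathcal O))$ with $\|v\|_{B^qL^p(\Omega;\dot H^s)}=(\sum_{j\geqslant1}\|\Pi_jv\|^q_{L^p(\Omega;\dot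 H^s)})^{1/q}<\infty$ ($\sup_j$ if $q=\infty$). $(X_0,X_1)_{\theta,q}$ denotes the real interpolation space (K-method), with norm $\big(\sum_{j\in\mathbb Z}|a^{-j\theta}K(a^j,f;X_0,X_1)|^q\big)^{1/q}$ (sup if $q=\infty$), $K(t,f)=\inf_{f=f_0+f_1}(\|f_0\|_{X_0}+t\|f_1\|_{X_1})$, $a>0$ fixed. *)

theory Defs
  imports "HOL-Probability.Probability"
begin

text \<open>
  An element of L^p(Omega; H^s(O)) is represented by its coefficient field
  v :: 'w => nat => real, where v w k = (v(w), phi_k) for k >= 1 (index 0 unused).
  The eigenvalues of the Dirichlet Laplacian are lam 1, lam 2, ... (lam 0 unused).
  Norms take values in ennreal (infinity = not in the space).
\<close>

definition epow :: "ennreal \<Rightarrow> real \<Rightarrow> ennreal" where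
  "epow x r = (if x = \<infinity> then \<infinity> else ennreal (enn2real x powr r))"

definition Hdot_sq :: "(nat \<Rightarrow> real) \<Rightarrow> real \<Rightarrow> (nat \<Rightarrow> real) \<Rightarrow> ennreal" where
  "Hdot_sq lam s u = (\<Sum>k. ennreal (lam (Suc k) powr s * (u (Suc k))\<^sup>2))"

definition Hdot_norm :: "(nat \<Rightarrow> real) \<Rightarrow> real \<Rightarrow> (nat \<Rightarrow> real) \<Rightarrow> ennreal" where
  "Hdot_norm lam s u = epow (Hdot_sq lam s u) (1/2)"

definition ess_sup_enn :: "'w measure \<Rightarrow> ('w \<Rightarrow> ennreal) \<Rightarrow> ennreal" where
  "ess_sup_enn M g = Inf {c. AE w in M. g w \<le> c}"

definition LpH_norm :: "'w measure \<Rightarrow> (nat \<Rightarrow> real) \<Rightarrow> ennreal \<Rightarrow> real \<Rightarrow> ('w \<Rightarrow> nat \<Rightarrow> real) \<Rightarrow> ennreal" where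
  "LpH_norm M lam p s v =
     (if p = \<infinity> then ess_sup_enn M (\<lambda>w. Hdot_norm lam s (v w))
      else epow (\<integral>\<^sup>+ w. epow (Hdot_norm lam s (v w)) (enn2real p) \<partial>M) (1 / enn2real p))"

text \<open>Strong measurability: all coefficients are random variables (Pettis, H^s separable).\<close>
definition coeff_measurable :: "'w measure \<Rightarrow> ('w \<Rightarrow> nat \<Rightarrow> real) \<Rightarrow> bool" where
  "coeff_measurable M v \<longleftrightarrow> (\<forall>k. (\<lambda>w. v w k) \<in> borel_measurable M)"

definition LpH :: "'w measure \<Rightarrow> (nat \<Rightarrow> real) \<Rightarrow> ennreal \<Rightarrow> real \<Rightarrow> ('w \<Rightarrow> nat \<Rightarrow> real) set" where
  "LpH M lam p s = {v. coeff_measurable M v \<and> LpH_norm M lam p s v < \<infinity>}"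

definition Pi_dy :: "nat \<Rightarrow> ('w \<Rightarrow> nat \<Rightarrow> real) \<Rightarrow> ('w \<Rightarrow> nat \<Rightarrow> real)" where
  "Pi_dy j v = (\<lambda>w k. if 2 ^ (j - 1) \<le> k \<and> k < 2 ^ j then v w k else 0)"

definition BLpH_norm :: "'w measure \<Rightarrow> (nat \<Rightarrow> real) \<Rightarrow> ennreal \<Rightarrow> ennreal \<Rightarrow> real \<Rightarrow> ('w \<Rightarrow> nat \<Rightarrow> real) \<Rightarrow> ennreal" where
  "BLpH_norm M lam q p s v =
     (if q = \<infinity> then (SUP j\<in>{1..}. LpH_norm M lam p s (Pi_dy j v))
      else epow (\<Sum>j. epow (LpH_norm M lam p s (Pi_dy (Suc j) v)) (enn2real q)) (1 / enn2real q))"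

definition BLpH :: "'w measure \<Rightarrow> (nat \<Rightarrow> real) \<Rightarrow> ennreal \<Rightarrow> ennreal \<Rightarrow> real \<Rightarrow> ('w \<Rightarrow> nat \<Rightarrow> real) set" where
  "BLpH M lam q p s = {v \<in> LpH M lam p (-2). BLpH_norm M lam q p s v < \<infinity>}"

type_synonym 'v nspace = "'v set \<times> ('v \<Rightarrow> ennreal)"

definition K_fun :: "('w \<Rightarrow> nat \<Rightarrow> real) nspace \<Rightarrow> ('w \<Rightarrow> nat \<Rightarrow> real) nspace \<Rightarrow> real \<Rightarrow> ('w \<Rightarrow> nat \<Rightarrow> real) \<Rightarrow> ennreal" where
  "K_fun X0 X1 t f = (INF (f0, f1) \<in> {(f0, f1). f0 \<in> fst X0 \<and> f1 \<in> fst X1 \<and> f = (\<lambda>w k. f0 w k + f1 w k)}.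
                        snd X0 f0 + ennreal t * snd X1 f1)"

definition sum_space :: "('w \<Rightarrow> nat \<Rightarrow> real) nspace \<Rightarrow> ('w \<Rightarrow> nat \<Rightarrow> real) nspace \<Rightarrow> ('w \<Rightarrow> nat \<Rightarrow> real) set" where
  "sum_space X0 X1 = {f. \<exists>f0\<in>fst X0. \<exists>f1\<in>fst X1. f = (\<lambda>w k. f0 w k + f1 w k)}"

definition interp_norm :: "real \<Rightarrow> ('w \<Rightarrow> nat \<Rightarrow> real) nspace \<Rightarrow> ('w \<Rightarrow> nat \<Rightarrow> real) nspace \<Rightarrow> real \<Rightarrow> ennreal \<Rightarrow> ('w \<Rightarrow> nat \<Rightarrow> real) \<Rightarrow> ennreal" where
  "interp_norm a X0 X1 \<theta> q f =
     (if q = \<infinity> then (SUP j::int. ennreal (a powr (- real_of_int j * \<theta>)) * K_fun X0 X1 (a powr real_of_int j) f)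
      else epow (\<integral>\<^sup>+ j. epow (ennreal (a powr (- real_of_int j * \<theta>)) * K_fun X0 X1 (a powr real_of_int j) f) (enn2real q)
                   \<partial>count_space (UNIV :: int set)) (1 / enn2real q))"

definition interp_space :: "real \<Rightarrow> ('w \<Rightarrow> nat \<Rightarrow> real) nspace \<Rightarrow> ('w \<Rightarrow> nat \<Rightarrow> real) nspace \<Rightarrow> real \<Rightarrow> ennreal \<Rightarrow> ('w \<Rightarrow> nat \<Rightarrow> real) nspace" where
  "interp_space a X0 X1 \<theta> q =
     ({f \<in> sum_space X0 X1. interp_norm a X0 X1 \<theta> q f < \<infinity>}, interp_norm a X0 X1 \<theta> q)"

definition equiv_spaces :: "'v nspace \<Rightarrow> 'v nspace \<Rightarrow> bool" where
  "equiv_spaces X Y \<longleftrightarrow> fst X = fst Y \<and>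
     (\<exists>c C. 0 < c \<and> 0 < C \<and> (\<forall>f\<in>fst X. ennreal c * snd X f \<le> snd Y f \<and> snd Y f \<le> ennreal C * snd X f))"

definition LpH_sp where "LpH_sp M lam p s = (LpH M lam p s, LpH_norm M lam p s)"
definition BLpH_sp where "BLpH_sp M lam q p s = (BLpH M lam q p s, BLpH_norm M lam q p s)"

text \<open>Standing assumptions on the eigenvalues of the Dirichlet Laplacian on a bounded domain
  of R^d: positive, nondecreasing, and Weyl's asymptotics lam_k ~ k^(2/d) (two-sided comparability).\<close>
definition dirichlet_eigenvalues :: "nat \<Rightarrow> (nat \<Rightarrow> real) \<Rightarrow> bool" where
  "dirichlet_eigenvalues d lam \<longleftrightarrow> d \<ge> 1 \<and> 0 < lam 1 \<and> (\<forall>k\<ge>1. lam k \<le> lam (Suc k)) \<and>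
     (\<exists>c C. 0 < c \<and> 0 < C \<and> (\<forall>k\<ge>1. c * real k powr (2 / real d) \<le> lam k \<and> lam k \<le> C * real k powr (2 / real d)))"

end

theory Submission
  imports Defs "HOL-Probability.Essential_Supremum"
begin

(*
  The dyadic projections diagonalise the problem. By Weyl's law the eigenvalues in the j-th
  dyadic block are comparable to G^(2j) with G = 2^(1/d), so on that block all the norms of
  L^p(Omega; H^sigma) agree up to the factor G^(j sigma), uniformly in j.  Cutting f into its
  low and high modes at a block J chosen from t gives
    K(t, f) <= C sum_j min (B^(-j theta), t B^(j (1 - theta))) b_j,
  where b_j is the L^p(Omega; H^s) norm of Pi_j f and B = G^(s1 - s0); conversely, since Pi_j is
  bounded on both endpoint spaces, b_j <= C B^(j theta) max (1, B^(-j) / t) K(t, f) for every t.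
  Sampling t = a^m, both bounds become discrete Hardy inequalities (convolutions with a summable
  geometric kernel), so the l^q norms of (b_j) and of (a^(-m theta) K(a^m, f)) are equivalent.
  Only the boundedness of Pi_j and of the dyadic cut-offs on the endpoint spaces enters, so the
  same argument applies to the endpoints B^infinity L^p(Omega; H^si).
*)

section \<open>Extended nonnegative reals\<close>

lemma epow_top [simp]: "epow top r = top"
  by (simp add: epow_def)

lemma epow_ennreal: "0 \<le> c \<Longrightarrow> epow (ennreal c) r = ennreal (c powr r)"
  by (simp add: epow_def)

lemma epow_zero [simp]: "r \<noteq> 0 \<Longrightarrow> epow 0 r = 0"
  by (simp add: epow_def)

lemma epow_one [simp]: "epow x 1 = x"
  by (cases x) (auto simp: epow_def)

lemma epow_eq_top_iff: "epow x r = top \<longleftrightarrow> x = top"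
  by (cases x) (auto simp: epow_def)

lemma epow_eq_0_iff: "0 < r \<Longrightarrow> epow x r = 0 \<longleftrightarrow> x = 0"
  by (cases x) (auto simp: epow_def)

lemma epow_mono: assumes "x \<le> y" "0 \<le> r" shows "epow x r \<le> epow y r"
proof (cases "y = top")
  case False
  then obtain b where b: "y = ennreal b" "0 \<le> b" by (cases y) auto
  with assms obtain a where a: "x = ennreal a" "0 \<le> a" "a \<le> b"
    by (cases x) (auto simp: top_unique)
  show ?thesis using a b assms by (simp add: epow_def powr_mono2 ennreal_leI)
qed simp

lemma epow_epow: assumes "0 < r" "0 < s" shows "epow (epow x r) s = epow x (r * s)"
  using assms by (cases x) (auto simp: epow_def powr_powr)

lemma epow_le_iff: assumes "0 < r" shows "epow x r \<le> y \<longleftrightarrow> x \<le> epow y (1/r)"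
proof
  assume "epow x r \<le> y"
  then have "epow (epow x r) (1/r) \<le> epow y (1/r)" using assms by (intro epow_mono) auto
  then show "x \<le> epow y (1/r)" using assms by (simp add: epow_epow)
next
  assume "x \<le> epow y (1/r)"
  then have "epow x r \<le> epow (epow y (1/r)) r" using assms by (intro epow_mono) auto
  then show "epow x r \<le> y" using assms by (simp add: epow_epow)
qed

lemma epow_mult: assumes "0 < r" shows "epow (x * y) r = epow x r * epow y r"
proof (cases "x = 0 \<or> y = 0")
  case True then show ?thesis using assms by auto
next
  case False
  then show ?thesis using assms
    by (cases x; cases y) (auto simp: epow_def ennreal_mult' ennreal_mult_top ennreal_top_mult powr_mult
       ennreal_mult[symmetric] simp del: ennreal_mult')
qed

lemma epow_SUP: assumes "0 < r" shows "epow (SUP i\<in>I. f i) r = (SUP i\<in>I. epow (f i) r)"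
proof (rule antisym)
  show "epow (SUP i\<in>I. f i) r \<le> (SUP i\<in>I. epow (f i) r)"
    unfolding epow_le_iff[OF assms]
  proof (rule SUP_least)
    fix i assume "i \<in> I"
    then have "epow (f i) r \<le> (SUP i\<in>I. epow (f i) r)" by (intro SUP_upper)
    then show "f i \<le> epow (SUP i\<in>I. epow (f i) r) (1/r)" using assms by (simp add: epow_le_iff)
  qed
  show "(SUP i\<in>I. epow (f i) r) \<le> epow (SUP i\<in>I. f i) r"
    using assms by (intro SUP_least epow_mono SUP_upper) auto
qed

lemma epow_power: "epow x (real (Suc n)) = x ^ Suc n"
proof (cases x)
  case (real r)
  then have "r powr real (Suc n) = r ^ Suc n"
    by (cases "r = 0") (auto simp: powr_realpow simp del: of_nat_Suc)
  then show ?thesis using real by (simp add: epow_def ennreal_power del: power_Suc)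
qed (auto simp: epow_def power_eq_top_ennreal)

lemma epow_2: "epow x 2 = x * x"
  using epow_power[of x 1] by (simp add: power2_eq_square)

lemma ennreal_le_cmult_less_top: "x \<le> ennreal c * y \<Longrightarrow> y < top \<Longrightarrow> x < (top :: ennreal)"
  by (erule le_less_trans) (simp add: ennreal_mult_less_top)

lemma ennreal_inverse_mult_le:
  fixes X Y :: ennreal assumes C: "0 < C" and h: "X \<le> ennreal C * Y"
  shows "ennreal (1 / C) * X \<le> Y"
proof -
  have "ennreal (1 / C) * X \<le> ennreal (1 / C) * (ennreal C * Y)" using h by (rule mult_left_mono) simp
  also have "\<dots> = (ennreal (1 / C) * ennreal C) * Y" by (rule mult.assoc[symmetric])
  also have "ennreal (1 / C) * ennreal C = 1" using C by (simp add: ennreal_mult[symmetric])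
  finally show ?thesis by simp
qed

lemma ennreal_le_inverse_mult:
  fixes X Y :: ennreal assumes c: "0 < c" and h: "ennreal c * X \<le> Y"
  shows "X \<le> ennreal (1 / c) * Y"
proof -
  have "X = (ennreal (1 / c) * ennreal c) * X" using c by (simp add: ennreal_mult[symmetric])
  also have "\<dots> \<le> ennreal (1 / c) * Y" using h by (simp add: mult.assoc mult_left_mono)
  finally show ?thesis .
qed

lemma le_cmult_Inf:
  fixes N :: ennreal
  assumes c: "0 < c" and h: "\<And>v. v \<in> S \<Longrightarrow> N \<le> ennreal c * v"
  shows "N \<le> ennreal c * Inf S"
proof -
  have inv: "ennreal (1/c) * ennreal c = 1" using c by (simp add: ennreal_mult[symmetric])
  have "ennreal (1/c) * N \<le> Inf S"
  proof (rule Inf_greatest)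
    fix v assume "v \<in> S"
    then have "ennreal (1/c) * N \<le> ennreal (1/c) * (ennreal c * v)" by (intro mult_left_mono h) auto
    also have "\<dots> = (ennreal (1/c) * ennreal c) * v" by (rule mult.assoc[symmetric])
    also have "\<dots> = v" by (simp only: inv mult_1)
    finally show "ennreal (1/c) * N \<le> v" .
  qed
  then have "ennreal c * (ennreal (1/c) * N) \<le> ennreal c * Inf S" by (rule mult_left_mono) simp
  also have "ennreal c * (ennreal (1/c) * N) = (ennreal (1/c) * ennreal c) * N" by (simp only: mult.assoc mult.left_commute)
  also have "\<dots> = N" by (simp only: inv mult_1)
  finally show ?thesis .
qed

lemma epow_borel: "(\<lambda>x::ennreal. epow x r) \<in> borel_measurable borel"
proof -
  have "(\<lambda>x::ennreal. if x \<in> {top} then top else ennreal (enn2real x powr r)) \<in> borel_measurable borel"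
    by (intro measurable_If_set) auto
  then show ?thesis by (simp add: epow_def[abs_def])
qed

lemma epow_measurable [measurable]:
  "g \<in> borel_measurable M \<Longrightarrow> (\<lambda>w. epow (g w) r) \<in> borel_measurable M"
  using measurable_compose[OF _ epow_borel] by blast

lemma enn2real_exponent:
  assumes "1 \<le> p" "p \<noteq> top" shows "1 \<le> enn2real p" "0 < enn2real p"
proof -
  show "1 \<le> enn2real p" using assms enn2real_mono[of 1 p] by (simp add: top.not_eq_extremum)
  then show "0 < enn2real p" by simp
qed

section \<open>\<open>L\<^sup>p\<close> norms of nonnegative functions\<close>

definition lp_norm :: "'w measure \<Rightarrow> ennreal \<Rightarrow> ('w \<Rightarrow> ennreal) \<Rightarrow> ennreal" where
  "lp_norm M p g = (if p = top then ess_sup_enn M g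
     else epow (\<integral>\<^sup>+ w. epow (g w) (enn2real p) \<partial>M) (1 / enn2real p))"

lemma ess_sup_enn_eq: "g \<in> borel_measurable M \<Longrightarrow> ess_sup_enn M g = esssup M g"
  by (simp add: ess_sup_enn_def esssup_eq_AE)

lemma ess_sup_enn_AE: "g \<in> borel_measurable M \<Longrightarrow> AE w in M. g w \<le> ess_sup_enn M g"
  using esssup_AE[of g M] by (simp add: ess_sup_enn_eq)

lemma ess_sup_enn_le: "AE w in M. g w \<le> c \<Longrightarrow> ess_sup_enn M g \<le> c"
  unfolding ess_sup_enn_def by (rule Inf_lower) simp

lemma ess_sup_enn_mono: "AE w in M. g w \<le> g' w \<Longrightarrow> ess_sup_enn M g \<le> ess_sup_enn M g'"
  unfolding ess_sup_enn_def by (rule Inf_mono) (auto elim: AE_mp intro!: exI)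

lemma lp_norm_mono:
  assumes "AE w in M. g w \<le> g' w"
  shows "lp_norm M p g \<le> lp_norm M p g'"
proof (cases "p = top")
  case True then show ?thesis using assms by (simp add: lp_norm_def ess_sup_enn_mono)
next
  case False
  have "0 \<le> enn2real p" by simp
  then show ?thesis using False assms
    by (auto simp: lp_norm_def intro!: epow_mono nn_integral_mono_AE elim!: AE_mp)
qed

lemma lp_norm_zero[simp]: assumes "1 \<le> p" shows "lp_norm M p (\<lambda>w. 0) = 0"
proof (cases "p = top")
  case True then show ?thesis
    using ess_sup_enn_le[where g="\<lambda>w. 0" and M=M and c=0] by (simp add: lp_norm_def)
next
  case False
  then show ?thesis using enn2real_exponent[OF assms False] by (simp add: lp_norm_def)
qed

lemma lp_norm_cmult:
  assumes "1 \<le> p" "g \<in> borel_measurable M" "0 \<le> c"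
  shows "lp_norm M p (\<lambda>w. ennreal c * g w) \<le> ennreal c * lp_norm M p g"
proof (cases "p = top")
  case True
  have "AE w in M. ennreal c * g w \<le> ennreal c * ess_sup_enn M g"
    using ess_sup_enn_AE[OF assms(2)] by eventually_elim (rule mult_left_mono, auto)
  then show ?thesis using True by (simp add: lp_norm_def ess_sup_enn_le)
next
  case False
  note P = enn2real_exponent[OF assms(1) False]
  have "(\<integral>\<^sup>+ w. epow (ennreal c * g w) (enn2real p) \<partial>M)
      = (\<integral>\<^sup>+ w. epow (ennreal c) (enn2real p) * epow (g w) (enn2real p) \<partial>M)"
    using P by (simp add: epow_mult)
  also have "\<dots> = epow (ennreal c) (enn2real p) * (\<integral>\<^sup>+ w. epow (g w) (enn2real p) \<partial>M)"
    using assms by (intro nn_integral_cmult) measurable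
  finally show ?thesis using False P
    by (simp add: lp_norm_def epow_mult epow_epow)
qed

lemma lp_norm_le_cmult:
  assumes "1 \<le> p" "g \<in> borel_measurable M" "0 \<le> c" "AE w in M. f w \<le> ennreal c * g w"
  shows "lp_norm M p f \<le> ennreal c * lp_norm M p g"
  using lp_norm_mono[OF assms(4)] lp_norm_cmult[OF assms(1-3)] by (rule order_trans)

lemma powr_convex_combination_le:
  fixes x y l P :: real
  assumes "0 \<le> x" "0 \<le> y" "0 \<le> l" "l \<le> 1" "1 \<le> P"
  shows "(l*x + (1-l)*y) powr P \<le> l * x powr P + (1-l) * y powr P"
proof (cases "x = 0 \<or> y = 0")
  case True
  then show ?thesis
  proof
    assume x: "x = 0"
    have "((1-l)*y) powr P = (1-l) powr P * y powr P" using assms by (simp add: powr_mult)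
    also have "\<dots> \<le> (1-l) powr 1 * y powr P"
      using assms by (intro mult_right_mono powr_mono') auto
    finally show ?thesis using x assms by simp
  next
    assume y: "y = 0"
    have "(l*x) powr P = l powr P * x powr P" using assms by (simp add: powr_mult)
    also have "\<dots> \<le> l powr 1 * x powr P"
      using assms by (intro mult_right_mono powr_mono') auto
    finally show ?thesis using y assms by simp
  qed
next
  case False
  then have "x \<in> {0<..}" "y \<in> {0<..}" using assms by auto
  from convex_onD[OF powr_convex[OF assms(5)], of "1-l" x y, OF _ _ this] assms
  show ?thesis by (simp add: algebra_simps)
qed

text \<open>With a and b the two L^p norms, this is the pointwise inequality behind Minkowski's inequality.\<close>

lemma powr_sum_le_weighted:
  fixes a b u v P :: real
  assumes "0 < a" "0 < b" "0 \<le> u" "0 \<le> v" "1 \<le> P"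
  shows "(u+v) powr P \<le> (a+b) powr (P-1) * (a powr (1-P) * u powr P + b powr (1-P) * v powr P)"
proof -
  define l where "l = a/(a+b)"
  have l: "0 \<le> l" "l \<le> 1" "1 - l = b/(a+b)" using assms by (auto simp: l_def field_simps)
  have e1: "l*(u/a) = u/(a+b)" using assms by (simp add: l_def)
  have e2: "(1-l)*(v/b) = v/(a+b)" using assms l(3) by simp
  have eq: "l*(u/a) + (1-l)*(v/b) = (u+v)/(a+b)" unfolding e1 e2 by (simp add: add_divide_distrib)
  have "((u+v)/(a+b)) powr P \<le> l * (u/a) powr P + (1-l) * (v/b) powr P"
    using powr_convex_combination_le[of "u/a" "v/b" l P] assms l eq by auto
  then have "(a+b) powr P * ((u+v)/(a+b)) powr P \<le> (a+b) powr P * (l * (u/a) powr P + (1-l) * (v/b) powr P)"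
    by (intro mult_left_mono) auto
  also have "(a+b) powr P * ((u+v)/(a+b)) powr P = (u+v) powr P"
    using assms by (simp add: powr_divide)
  also have "(a+b) powr P * (l * (u/a) powr P + (1-l) * (v/b) powr P)
     = (a+b) powr (P-1) * (a powr (1-P) * u powr P + b powr (1-P) * v powr P)"
  proof -
    have 1: "(a+b) powr P = (a+b) powr (P-1) * (a+b)" using assms by (simp add: powr_diff)
    have 2: "a powr (1-P) = a / a powr P" using assms by (simp add: powr_diff)
    have 3: "b powr (1-P) = b / b powr P" using assms by (simp add: powr_diff)
    have g: "\<And>(z1::real) z2 z3 z4 z5. z2 \<noteq> 0 \<Longrightarrow> z4 \<noteq> 0 \<Longrightarrow> (z1*z2)*((z5/z2)*(z3/z4)) = z1*(z5/z4*z3)"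
      by (simp add: field_simps)
    have "(a+b) powr P * (l * (u/a) powr P) = (a+b) powr (P-1) * (a powr (1-P) * u powr P)"
      unfolding 1 2 l_def using assms by (simp add: powr_divide g)
    moreover have "(a+b) powr P * ((1-l) * (v/b) powr P) = (a+b) powr (P-1) * (b powr (1-P) * v powr P)"
      unfolding 1 3 l(3) using assms by (simp add: powr_divide g)
    ultimately show ?thesis by (simp add: distrib_left)
  qed
  finally show ?thesis .
qed

lemma epow_sum_le_weighted:
  fixes a b P :: real and u v :: ennreal
  assumes "0 < a" "0 < b" "1 \<le> P"
  shows "epow (u+v) P \<le> ennreal ((a+b) powr (P-1)) *
     (ennreal (a powr (1-P)) * epow u P + ennreal (b powr (1-P)) * epow v P)"
proof (cases "u = top \<or> v = top")
  case True then show ?thesis using assms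
    by (auto simp: ennreal_mult_top ennreal_top_mult)
next
  case False
  then obtain x y where xy: "u = ennreal x" "v = ennreal y" "0 \<le> x" "0 \<le> y" by (cases u; cases v) auto
  have "(x+y) powr P \<le> (a+b) powr (P-1) * (a powr (1-P) * x powr P + b powr (1-P) * y powr P)"
    using powr_sum_le_weighted[of a b x y P] assms xy by auto
  then show ?thesis using xy assms
    by (simp add: epow_def ennreal_mult'[symmetric] ennreal_plus[symmetric] ennreal_leI del: ennreal_plus)
qed

lemma AE_eq_0_if_nn_integral_epow_eq_0:
  assumes "g \<in> borel_measurable M" "0 < P" "(\<integral>\<^sup>+ w. epow (g w) P \<partial>M) = 0"
  shows "AE w in M. g w = 0"
proof -
  have "AE w in M. epow (g w) P = 0" using assms by (subst (asm) nn_integral_0_iff_AE) auto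
  then show ?thesis using assms(2) by (simp add: epow_eq_0_iff)
qed

lemma nn_integral_epow_add_le:
  fixes P a b :: real
  assumes P: "1 \<le> P" and ab: "0 < a" "0 < b"
    and g1: "g1 \<in> borel_measurable M" "(\<integral>\<^sup>+ w. epow (g1 w) P \<partial>M) = ennreal (a powr P)"
    and g2: "g2 \<in> borel_measurable M" "(\<integral>\<^sup>+ w. epow (g2 w) P \<partial>M) = ennreal (b powr P)"
  shows "(\<integral>\<^sup>+ w. epow (g1 w + g2 w) P \<partial>M) \<le> ennreal ((a + b) powr P)"
proof -
  have "(\<integral>\<^sup>+ w. epow (g1 w + g2 w) P \<partial>M) \<le> (\<integral>\<^sup>+ w. ennreal ((a+b) powr (P-1)) *
      (ennreal (a powr (1-P)) * epow (g1 w) P + ennreal (b powr (1-P)) * epow (g2 w) P) \<partial>M)"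
    using ab P by (intro nn_integral_mono epow_sum_le_weighted) auto
  also have "\<dots> = ennreal ((a+b) powr (P-1) * (a powr (1-P) * a powr P + b powr (1-P) * b powr P))"
    using g1 g2 ab by (simp add: nn_integral_cmult nn_integral_add ennreal_mult'[symmetric]
        ennreal_plus[symmetric] del: ennreal_plus)
  also have "(a+b) powr (P-1) * (a powr (1-P) * a powr P + b powr (1-P) * b powr P) = (a+b) powr P"
  proof -
    have "(a+b) powr (P-1) * (a+b) = (a+b) powr (P-1) * (a+b) powr 1" using ab by simp
    also have "\<dots> = (a+b) powr (P - 1 + 1)" by (rule powr_add[symmetric])
    finally show ?thesis using ab by (simp add: powr_add[symmetric])
  qed
  finally show ?thesis .
qed

lemma lp_norm_triangle:
  assumes p: "1 \<le> p" and g1: "g1 \<in> borel_measurable M" and g2: "g2 \<in> borel_measurable M"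
  shows "lp_norm M p (\<lambda>w. g1 w + g2 w) \<le> lp_norm M p g1 + lp_norm M p g2"
proof (cases "p = top")
  case True
  have "AE w in M. g1 w + g2 w \<le> ess_sup_enn M g1 + ess_sup_enn M g2"
    using ess_sup_enn_AE[OF g1] ess_sup_enn_AE[OF g2] by eventually_elim (rule add_mono)
  then show ?thesis using True by (simp add: lp_norm_def ess_sup_enn_le)
next
  case False
  define P where "P = enn2real p"
  have P: "1 \<le> P" "0 < P" using enn2real_exponent[OF p False] by (auto simp: P_def)
  define I1 where "I1 = (\<integral>\<^sup>+ w. epow (g1 w) P \<partial>M)"
  define I2 where "I2 = (\<integral>\<^sup>+ w. epow (g2 w) P \<partial>M)"
  have L1: "lp_norm M p g1 = epow I1 (1/P)" and L2: "lp_norm M p g2 = epow I2 (1/P)"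
    and L: "lp_norm M p (\<lambda>w. g1 w + g2 w) = epow (\<integral>\<^sup>+ w. epow (g1 w + g2 w) P \<partial>M) (1/P)"
    using False by (simp_all add: lp_norm_def I1_def I2_def P_def)
  consider "I1 = top \<or> I2 = top" | "I1 = 0" | "I2 = 0" | A B where
      "I1 = ennreal A" "0 < A" "I2 = ennreal B" "0 < B"
    by (cases I1; cases I2) (auto simp: less_le)
  then show ?thesis
  proof cases
    case 1 then show ?thesis unfolding L1 L2 by (auto simp: epow_eq_top_iff)
  next
    case 2
    then have "AE w in M. g1 w = 0" using g1 P by (intro AE_eq_0_if_nn_integral_epow_eq_0) (auto simp: I1_def)
    then have "lp_norm M p (\<lambda>w. g1 w + g2 w) \<le> lp_norm M p g2" by (intro lp_norm_mono) auto
    then show ?thesis by (simp add: add_increasing)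
  next
    case 3
    then have "AE w in M. g2 w = 0" using g2 P by (intro AE_eq_0_if_nn_integral_epow_eq_0) (auto simp: I2_def)
    then have "lp_norm M p (\<lambda>w. g1 w + g2 w) \<le> lp_norm M p g1" by (intro lp_norm_mono) auto
    then show ?thesis by (simp add: add_increasing2)
  next
    case (4 A B)
    define a where "a = A powr (1/P)"
    define b where "b = B powr (1/P)"
    have ab: "0 < a" "0 < b" using 4 by (auto simp: a_def b_def)
    have "A = a powr P" "B = b powr P" using 4 P by (auto simp: a_def b_def powr_powr)
    then have "(\<integral>\<^sup>+ w. epow (g1 w + g2 w) P \<partial>M) \<le> ennreal ((a + b) powr P)"
      using 4 P ab g1 g2 by (intro nn_integral_epow_add_le) (auto simp: I1_def I2_def)
    then have "lp_norm M p (\<lambda>w. g1 w + g2 w) \<le> epow (ennreal ((a + b) powr P)) (1/P)"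
      unfolding L using P by (intro epow_mono) auto
    also have "\<dots> = lp_norm M p g1 + lp_norm M p g2"
      unfolding L1 L2 using ab P 4 by (simp add: epow_ennreal powr_powr a_def b_def)
    finally show ?thesis .
  qed
qed

lemma lp_norm_sum:
  fixes n :: nat
  assumes p: "1 \<le> p" and g: "\<And>i. g i \<in> borel_measurable M"
  shows "lp_norm M p (\<lambda>w. \<Sum>i<n. g i w) \<le> (\<Sum>i<n. lp_norm M p (g i))"
proof (induction n)
  case 0 then show ?case using p by simp
next
  case (Suc n)
  have "lp_norm M p (\<lambda>w. \<Sum>i<Suc n. g i w) = lp_norm M p (\<lambda>w. (\<Sum>i<n. g i w) + g n w)" by simp
  also have "\<dots> \<le> lp_norm M p (\<lambda>w. \<Sum>i<n. g i w) + lp_norm M p (g n)"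
    using g by (intro lp_norm_triangle p) auto
  also have "\<dots> \<le> (\<Sum>i<n. lp_norm M p (g i)) + lp_norm M p (g n)" using Suc by (intro add_mono) auto
  finally show ?case by simp
qed

lemma lp_norm_suminf:
  assumes p: "1 \<le> p" and g: "\<And>i. g i \<in> borel_measurable M"
  shows "lp_norm M p (\<lambda>w. \<Sum>i. g i w) \<le> (\<Sum>i. lp_norm M p (g i))"
proof (cases "p = top")
  case True
  have "AE w in M. \<forall>i. g i w \<le> ess_sup_enn M (g i)"
    using g by (intro AE_all_countable[THEN iffD2] allI ess_sup_enn_AE)
  then have "AE w in M. (\<Sum>i. g i w) \<le> (\<Sum>i. ess_sup_enn M (g i))"
    by eventually_elim (intro suminf_le summableI, auto)
  then show ?thesis using True by (simp add: lp_norm_def ess_sup_enn_le)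
next
  case False
  note P = enn2real_exponent[OF p False]
  define S where "S n w = (\<Sum>i<n. g i w)" for n w
  have Sm: "S n \<in> borel_measurable M" for n unfolding S_def using g by measurable
  have inc: "incseq (\<lambda>n. epow (S n w) (enn2real p))" for w
    by (intro incseq_SucI epow_mono) (auto simp: S_def)
  have sum_eq: "(\<Sum>i. g i w) = (SUP n. S n w)" for w unfolding S_def by (rule suminf_eq_SUP)
  have "lp_norm M p (\<lambda>w. \<Sum>i. g i w) = epow (\<integral>\<^sup>+ w. (SUP n. epow (S n w) (enn2real p)) \<partial>M) (1 / enn2real p)"
    using False P by (simp add: lp_norm_def sum_eq epow_SUP)
  also have "\<dots> = epow (SUP n. \<integral>\<^sup>+ w. epow (S n w) (enn2real p) \<partial>M) (1 / enn2real p)"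
    using inc Sm by (subst nn_integral_monotone_convergence_SUP) (auto simp: incseq_def le_fun_def)
  also have "\<dots> = (SUP n. lp_norm M p (S n))"
    using False P by (simp add: lp_norm_def epow_SUP)
  also have "\<dots> \<le> (\<Sum>i. lp_norm M p (g i))"
  proof (rule SUP_least)
    fix n
    have "lp_norm M p (S n) \<le> (\<Sum>i<n. lp_norm M p (g i))" unfolding S_def by (rule lp_norm_sum[OF p g])
    also have "\<dots> \<le> (\<Sum>i. lp_norm M p (g i))" by (intro sum_le_suminf summableI) auto
    finally show "lp_norm M p (S n) \<le> (\<Sum>i. lp_norm M p (g i))" .
  qed
  finally show ?thesis .
qed

lemma ess_sup_enn_count_space: "ess_sup_enn (count_space A) g = (SUP a\<in>A. g a)"
proof -
  have "{c. AE w in count_space A. g w \<le> c} = {c. \<forall>a\<in>A. g a \<le> c}"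
    by (simp add: AE_count_space)
  then show ?thesis unfolding ess_sup_enn_def
    by (auto intro!: antisym Inf_lower SUP_upper Inf_greatest SUP_least)
qed

lemma lp_norm_count_space_top: "lp_norm (count_space A) top g = (SUP a\<in>A. g a)"
  by (simp add: lp_norm_def ess_sup_enn_count_space)

lemma lp_norm_reindex_le:
  assumes q: "1 \<le> q" and inj: "inj_on \<sigma> S"
  shows "lp_norm (count_space UNIV) q (\<lambda>a. if a \<in> S then h (\<sigma> a) else 0) \<le> lp_norm (count_space UNIV) q h"
proof (cases "q = top")
  case True
  show ?thesis unfolding True lp_norm_count_space_top
    by (rule SUP_least) (auto intro: SUP_upper)
next
  case False
  note P = enn2real_exponent[OF q False]
  have "(\<integral>\<^sup>+ a. epow (if a \<in> S then h (\<sigma> a) else 0) (enn2real q) \<partial>count_space UNIV)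
      = (\<integral>\<^sup>+ a. epow (h (\<sigma> a)) (enn2real q) * indicator S a \<partial>count_space UNIV)"
    using P by (intro nn_integral_cong) (auto simp: indicator_def)
  also have "\<dots> = (\<integral>\<^sup>+ a. epow (h (\<sigma> a)) (enn2real q) \<partial>count_space S)"
    by (cases "S = UNIV") (simp_all add: nn_integral_count_space_indicator)
  also have "\<dots> = (\<integral>\<^sup>+ b. epow (h b) (enn2real q) \<partial>count_space (\<sigma> ` S))"
    using inj by (intro nn_integral_bij_count_space) (simp add: bij_betw_def)
  also have "\<dots> \<le> (\<integral>\<^sup>+ b. epow (h b) (enn2real q) \<partial>count_space UNIV)"
  proof (cases "\<sigma> ` S = UNIV")
    case False
    have "(\<integral>\<^sup>+ b. epow (h b) (enn2real q) \<partial>count_space (\<sigma> ` S))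
       = (\<integral>\<^sup>+ b. epow (h b) (enn2real q) * indicator (\<sigma> ` S) b \<partial>count_space UNIV)"
      using False by (simp add: nn_integral_count_space_indicator)
    also have "\<dots> \<le> (\<integral>\<^sup>+ b. epow (h b) (enn2real q) \<partial>count_space UNIV)"
      by (intro nn_integral_mono) (simp add: indicator_def)
    finally show ?thesis .
  qed simp
  finally show ?thesis using False P by (simp add: lp_norm_def epow_mono)
qed

lemma lp_norm_bij:
  assumes q: "1 \<le> q" and b: "bij \<sigma>"
  shows "lp_norm (count_space UNIV) q (\<lambda>a. h (\<sigma> a)) = lp_norm (count_space UNIV) q h"
proof (rule antisym)
  show "lp_norm (count_space UNIV) q (\<lambda>a. h (\<sigma> a)) \<le> lp_norm (count_space UNIV) q h"
    using lp_norm_reindex_le[OF q, of \<sigma> UNIV h] b by (simp add: bij_def)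
  have "lp_norm (count_space UNIV) q h = lp_norm (count_space UNIV) q (\<lambda>a. (\<lambda>a. h (\<sigma> a)) (inv \<sigma> a))"
    using b by (simp add: bij_inv_eq_iff surj_f_inv_f bij_is_surj)
  also have "\<dots> \<le> lp_norm (count_space UNIV) q (\<lambda>a. h (\<sigma> a))"
    using lp_norm_reindex_le[OF q, of "inv \<sigma>" UNIV "\<lambda>a. h (\<sigma> a)"] b
    by (simp add: bij_imp_bij_inv bij_is_inj)
  finally show "lp_norm (count_space UNIV) q h \<le> lp_norm (count_space UNIV) q (\<lambda>a. h (\<sigma> a))" .
qed

lemma nn_integral_int_as_nat:
  fixes G :: "int \<Rightarrow> ennreal"
  shows "(\<integral>\<^sup>+ z. G z \<partial>count_space UNIV) = (\<Sum>i. G (from_nat_into (UNIV::int set) i))"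
proof -
  have b: "bij_betw (from_nat_into (UNIV::int set)) UNIV UNIV"
    by (intro bij_betw_from_nat_into) auto
  show ?thesis
    by (simp add: nn_integral_bij_count_space[OF b, symmetric] nn_integral_count_space_nat)
qed

lemma lp_norm_nn_integral_int:
  fixes g :: "int \<Rightarrow> 'w \<Rightarrow> ennreal"
  assumes p: "1 \<le> p" and g: "\<And>z. g z \<in> borel_measurable M"
  shows "lp_norm M p (\<lambda>w. \<integral>\<^sup>+ z. g z w \<partial>count_space UNIV) \<le> (\<integral>\<^sup>+ z. lp_norm M p (g z) \<partial>count_space UNIV)"
  unfolding nn_integral_int_as_nat using g by (intro lp_norm_suminf p) auto

lemma sum_if_mod_eq: "(L::nat) \<ge> 1 \<Longrightarrow> (\<Sum>r<L. if j mod L = r then (v::ennreal) else 0) = v"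
  by (simp add: sum.delta)

lemma lp_norm_compose_le:
  fixes \<sigma> :: "nat \<Rightarrow> 'b" and L :: nat
  assumes q: "1 \<le> q" and L: "L \<ge> 1" and inj: "\<And>r. r < L \<Longrightarrow> inj_on \<sigma> {j. j mod L = r}"
  shows "lp_norm (count_space UNIV) q (\<lambda>j. h (\<sigma> j)) \<le> of_nat L * lp_norm (count_space UNIV) q h"
proof -
  have "lp_norm (count_space UNIV) q (\<lambda>j. h (\<sigma> j))
      = lp_norm (count_space UNIV) q (\<lambda>j. \<Sum>r<L. (if j \<in> {j. j mod L = r} then h (\<sigma> j) else 0))"
    using L by (simp add: sum_if_mod_eq)
  also have "\<dots> \<le> (\<Sum>r<L. lp_norm (count_space UNIV) q (\<lambda>j. if j \<in> {j. j mod L = r} then h (\<sigma> j) else 0))"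
    by (rule lp_norm_sum[OF q]) simp
  also have "\<dots> \<le> (\<Sum>r<L. lp_norm (count_space UNIV) q h)"
    by (intro sum_mono lp_norm_reindex_le[OF q] inj) auto
  finally show ?thesis by simp
qed

lemma suminf_if_inj_on_eq:
  fixes n :: "nat \<Rightarrow> 'b" and x :: "nat \<Rightarrow> ennreal"
  assumes inj: "inj_on n S"
  shows "(\<Sum>j. if n j = l \<and> j \<in> S then x j else 0) = (if l \<in> n ` S then x (inv_into S n l) else 0)"
proof (cases "l \<in> n ` S")
  case True
  define j0 where "j0 = inv_into S n l"
  have j0: "j0 \<in> S" "n j0 = l" using True by (auto simp: j0_def inv_into_into f_inv_into_f)
  have "(\<lambda>j. if n j = l \<and> j \<in> S then x j else 0) = (\<lambda>j. if j = j0 then x j else 0)"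
    using inj j0 by (auto simp: inj_on_def)
  then show ?thesis using True sums_single[of j0 x] by (simp add: sums_iff j0_def)
next
  case False
  then have "(\<lambda>j. if n j = l \<and> j \<in> S then x j else 0) = (\<lambda>j. 0)" by (intro ext) (auto simp: image_iff)
  then show ?thesis using False by simp
qed

lemma lp_norm_pushforward_le:
  fixes n :: "nat \<Rightarrow> 'b" and x :: "nat \<Rightarrow> ennreal" and L :: nat
  assumes q: "1 \<le> q" and L: "L \<ge> 1" and inj: "\<And>r. r < L \<Longrightarrow> inj_on n {j. j mod L = r}"
  shows "lp_norm (count_space UNIV) q (\<lambda>l. \<Sum>j. if n j = l then x j else 0) \<le> of_nat L * lp_norm (count_space UNIV) q x"
proof -
  define S where "S r = {j. j mod L = r}" for r
  have split: "(\<Sum>j. if n j = l then x j else 0) = (\<Sum>r<L. if l \<in> n ` S r then x (inv_into (S r) n l) else 0)"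
    for l
  proof -
    have "(\<Sum>j. if n j = l then x j else 0) = (\<Sum>j. \<Sum>r<L. if n j = l \<and> j \<in> S r then x j else 0)"
      using L by (intro suminf_cong) (auto simp: S_def sum.delta if_distrib cong: if_cong)
    also have "\<dots> = (\<Sum>r<L. \<Sum>j. if n j = l \<and> j \<in> S r then x j else 0)"
      by (rule suminf_sum) auto
    also have "\<dots> = (\<Sum>r<L. if l \<in> n ` S r then x (inv_into (S r) n l) else 0)"
      using inj by (intro sum.cong refl suminf_if_inj_on_eq) (simp add: S_def)
    finally show ?thesis .
  qed
  have "lp_norm (count_space UNIV) q (\<lambda>l. \<Sum>j. if n j = l then x j else 0)
      \<le> (\<Sum>r<L. lp_norm (count_space UNIV) q (\<lambda>l. if l \<in> n ` S r then x (inv_into (S r) n l) else 0))"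
    unfolding split by (rule lp_norm_sum[OF q]) simp
  also have "\<dots> \<le> (\<Sum>r<L. lp_norm (count_space UNIV) q x)"
    by (intro sum_mono lp_norm_reindex_le[OF q] inj_on_inv_into) auto
  finally show ?thesis by simp
qed

lemma lp_norm_component_le:
  fixes x :: "nat \<Rightarrow> ennreal"
  assumes q: "1 \<le> q"
  shows "x j \<le> lp_norm (count_space UNIV) q x"
proof (cases "q = top")
  case True then show ?thesis by (simp add: lp_norm_count_space_top SUP_upper)
next
  case False
  note P = enn2real_exponent[OF q False]
  have "epow (x j) (enn2real q) = (\<Sum>i\<in>{j}. epow (x i) (enn2real q))" by simp
  also have "\<dots> \<le> (\<Sum>i. epow (x i) (enn2real q))" by (intro sum_le_suminf summableI) auto
  finally have "epow (x j) (enn2real q) \<le> (\<integral>\<^sup>+i. epow (x i) (enn2real q) \<partial>count_space UNIV)"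
    by (simp add: nn_integral_count_space_nat)
  then show ?thesis using False P by (simp add: lp_norm_def epow_le_iff)
qed

section \<open>The \<open>H\<^sup>s\<close> norm on dyadic blocks\<close>

definition dyadic_block :: "nat \<Rightarrow> (nat \<Rightarrow> real) \<Rightarrow> (nat \<Rightarrow> real)" where
  "dyadic_block j u = (\<lambda>k. if 2 ^ (j - 1) \<le> k \<and> k < 2 ^ j then u k else 0)"

lemma Pi_dy_eq_dyadic_block: "Pi_dy j v w = dyadic_block j (v w)"
  by (simp add: Pi_dy_def dyadic_block_def)

text \<open>Position k of Hdot_weight carries the coefficient k + 1; index 0 is unused.\<close>

definition Hdot_weight :: "(nat \<Rightarrow> real) \<Rightarrow> real \<Rightarrow> (nat \<Rightarrow> real) \<Rightarrow> nat \<Rightarrow> ennreal" where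
  "Hdot_weight lam s u k = ennreal (sqrt (lam (Suc k) powr s) * \<bar>u (Suc k)\<bar>)"

lemma Hdot_norm_as_lp_norm: "Hdot_norm lam s u = lp_norm (count_space UNIV) 2 (Hdot_weight lam s u)"
proof -
  have "epow (Hdot_weight lam s u k) 2 = ennreal (lam (Suc k) powr s * (u (Suc k))\<^sup>2)" for k
  proof -
    have "sqrt (lam (Suc k) powr s) * \<bar>u (Suc k)\<bar> * (sqrt (lam (Suc k) powr s) * \<bar>u (Suc k)\<bar>)
        = lam (Suc k) powr s * (u (Suc k))\<^sup>2"
      by (simp add: algebra_simps power2_eq_square)
    then show ?thesis by (simp add: Hdot_weight_def epow_2 ennreal_mult'[symmetric])
  qed
  then show ?thesis
    by (simp add: Hdot_norm_def Hdot_sq_def lp_norm_def nn_integral_count_space_nat)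
qed

lemma Hdot_weight_add_le: "Hdot_weight lam s (\<lambda>k. u k + v k) k \<le> Hdot_weight lam s u k + Hdot_weight lam s v k"
proof -
  have "sqrt (lam (Suc k) powr s) * \<bar>u (Suc k) + v (Suc k)\<bar>
     \<le> sqrt (lam (Suc k) powr s) * \<bar>u (Suc k)\<bar> + sqrt (lam (Suc k) powr s) * \<bar>v (Suc k)\<bar>"
    by (simp add: distrib_left[symmetric] mult_left_mono abs_triangle_ineq)
  then show ?thesis by (simp add: Hdot_weight_def ennreal_plus[symmetric] ennreal_leI del: ennreal_plus)
qed

lemma Hdot_norm_triangle: "Hdot_norm lam s (\<lambda>k. u k + v k) \<le> Hdot_norm lam s u + Hdot_norm lam s v"
proof -
  have "lp_norm (count_space UNIV) 2 (Hdot_weight lam s (\<lambda>k. u k + v k))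
      \<le> lp_norm (count_space UNIV) 2 (\<lambda>k. Hdot_weight lam s u k + Hdot_weight lam s v k)"
    by (intro lp_norm_mono AE_I2 Hdot_weight_add_le)
  also have "\<dots> \<le> lp_norm (count_space UNIV) 2 (Hdot_weight lam s u) + lp_norm (count_space UNIV) 2 (Hdot_weight lam s v)"
    by (intro lp_norm_triangle) auto
  finally show ?thesis by (simp add: Hdot_norm_as_lp_norm)
qed

lemma Hdot_norm_mono:
  assumes "\<And>k. k \<ge> 1 \<Longrightarrow> \<bar>u k\<bar> \<le> \<bar>v k\<bar>"
  shows "Hdot_norm lam s u \<le> Hdot_norm lam s v"
proof -
  have "Hdot_weight lam s u k \<le> Hdot_weight lam s v k" for k
    using assms[of "Suc k"] by (simp add: Hdot_weight_def ennreal_leI mult_left_mono)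
  then show ?thesis unfolding Hdot_norm_as_lp_norm by (intro lp_norm_mono AE_I2) auto
qed

lemma dyadic_block_exists: "k \<ge> 1 \<Longrightarrow> \<exists>j. 2 ^ (j - 1) \<le> k \<and> k < (2::nat) ^ j"
proof -
  assume k: "k \<ge> 1"
  define j where "j = (LEAST j. k < (2::nat) ^ j)"
  have ex: "\<exists>j. k < (2::nat) ^ j" by (intro exI[of _ k] less_exp)
  have 1: "k < 2 ^ j" unfolding j_def by (rule LeastI_ex[OF ex])
  have "j \<noteq> 0" using 1 k by (cases j) auto
  then have "\<not> k < 2 ^ (j - 1)" unfolding j_def
    by (metis diff_less j_def not_less_Least zero_less_one gr0I)
  then show ?thesis using 1 by (intro exI[of _ j]) auto
qed

lemma Hdot_norm_le_sum_blocks: "Hdot_norm lam s u \<le> (\<Sum>j. Hdot_norm lam s (dyadic_block j u))"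
proof -
  have "Hdot_weight lam s u k \<le> (\<Sum>j. Hdot_weight lam s (dyadic_block j u) k)" for k
  proof -
    obtain j where j: "2 ^ (j - 1) \<le> Suc k" "Suc k < (2::nat) ^ j" using dyadic_block_exists[of "Suc k"] by auto
    have "Hdot_weight lam s u k = Hdot_weight lam s (dyadic_block j u) k" using j by (simp add: Hdot_weight_def dyadic_block_def)
    also have "\<dots> = (\<Sum>i\<in>{j}. Hdot_weight lam s (dyadic_block i u) k)" by simp
    also have "\<dots> \<le> (\<Sum>i. Hdot_weight lam s (dyadic_block i u) k)" by (intro sum_le_suminf summableI) auto
    finally show ?thesis .
  qed
  then have "lp_norm (count_space UNIV) 2 (Hdot_weight lam s u) \<le> lp_norm (count_space UNIV) 2 (\<lambda>k. \<Sum>j. Hdot_weight lam s (dyadic_block j u) k)"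
    by (intro lp_norm_mono AE_I2) auto
  also have "\<dots> \<le> (\<Sum>j. lp_norm (count_space UNIV) 2 (Hdot_weight lam s (dyadic_block j u)))"
    by (intro lp_norm_suminf) auto
  finally show ?thesis by (simp add: Hdot_norm_as_lp_norm)
qed

lemma Hdot_norm_le_cmult:
  assumes "0 \<le> E" "\<And>k. k \<ge> 1 \<Longrightarrow> u k \<noteq> 0 \<Longrightarrow> sqrt (lam k powr s) \<le> E * sqrt (lam k powr s')"
  shows "Hdot_norm lam s u \<le> ennreal E * Hdot_norm lam s' u"
proof -
  have "Hdot_weight lam s u k \<le> ennreal E * Hdot_weight lam s' u k" for k
  proof (cases "u (Suc k) = 0")
    case False
    have "sqrt (lam (Suc k) powr s) * \<bar>u (Suc k)\<bar> \<le> E * sqrt (lam (Suc k) powr s') * \<bar>u (Suc k)\<bar>"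
      using assms(2)[of "Suc k"] False by (intro mult_right_mono) auto
    then show ?thesis using assms(1) by (simp add: Hdot_weight_def ennreal_mult'[symmetric] ennreal_leI mult.assoc)
  qed (simp add: Hdot_weight_def)
  then show ?thesis unfolding Hdot_norm_as_lp_norm by (intro lp_norm_le_cmult AE_I2) (auto simp: assms)
qed

section \<open>The norm of \<open>L\<^sup>p(\<Omega>; H\<^sup>s)\<close>\<close>

lemma Hdot_norm_measurable [measurable]:
  assumes "coeff_measurable M v"
  shows "(\<lambda>w. Hdot_norm lam s (v w)) \<in> borel_measurable M"
proof -
  have [measurable]: "(\<lambda>w. v w k) \<in> borel_measurable M" for k using assms by (simp add: coeff_measurable_def)
  show ?thesis unfolding Hdot_norm_def Hdot_sq_def by measurable
qed

lemma LpH_norm_as_lp_norm: "LpH_norm M lam p s v = lp_norm M p (\<lambda>w. Hdot_norm lam s (v w))"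
  by (simp add: LpH_norm_def lp_norm_def)

lemma coeff_measurable_add: "coeff_measurable M f0 \<Longrightarrow> coeff_measurable M f1 \<Longrightarrow> coeff_measurable M (\<lambda>w k. f0 w k + f1 w k)"
  unfolding coeff_measurable_def by (auto intro: borel_measurable_add)

lemma coeff_measurable_restrict: "coeff_measurable M f \<Longrightarrow> coeff_measurable M (\<lambda>w k. if P k then f w k else 0)"
  unfolding coeff_measurable_def
proof (intro allI)
  fix k assume "\<forall>k. (\<lambda>w. f w k) \<in> borel_measurable M"
  then show "(\<lambda>w. if P k then f w k else 0) \<in> borel_measurable M" by (cases "P k") auto
qed

lemma coeff_measurable_Pi_dy: "coeff_measurable M f \<Longrightarrow> coeff_measurable M (Pi_dy j f)"
  unfolding Pi_dy_def by (rule coeff_measurable_restrict)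

lemma coeff_measurable_zero: "coeff_measurable M (\<lambda>w k. 0)"
  by (simp add: coeff_measurable_def)

lemma Pi_dy_add: "Pi_dy j (\<lambda>w k. f0 w k + f1 w k) = (\<lambda>w k. Pi_dy j f0 w k + Pi_dy j f1 w k)"
  by (auto simp: Pi_dy_def fun_eq_iff)

lemma Pi_dy_0: "Pi_dy 0 f = (\<lambda>w k. 0)"
  by (auto simp: Pi_dy_def fun_eq_iff)

lemma Hdot_norm_zero: "Hdot_norm lam s (\<lambda>k. 0) = 0"
  by (simp add: Hdot_norm_def Hdot_sq_def)

lemma LpH_norm_zero: "1 \<le> p \<Longrightarrow> LpH_norm M lam p s (\<lambda>w k. 0) = 0"
  by (simp add: LpH_norm_as_lp_norm Hdot_norm_zero)

lemma LpH_norm_triangle: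
  assumes p: "1 \<le> p" and "coeff_measurable M f0" "coeff_measurable M f1"
  shows "LpH_norm M lam p s (\<lambda>w k. f0 w k + f1 w k) \<le> LpH_norm M lam p s f0 + LpH_norm M lam p s f1"
proof -
  have "LpH_norm M lam p s (\<lambda>w k. f0 w k + f1 w k) \<le> lp_norm M p (\<lambda>w. Hdot_norm lam s (f0 w) + Hdot_norm lam s (f1 w))"
    unfolding LpH_norm_as_lp_norm by (intro lp_norm_mono AE_I2 Hdot_norm_triangle)
  also have "\<dots> \<le> LpH_norm M lam p s f0 + LpH_norm M lam p s f1"
    unfolding LpH_norm_as_lp_norm using assms by (intro lp_norm_triangle) auto
  finally show ?thesis .
qed

lemma LpH_norm_mono:
  assumes "\<And>w k. k \<ge> 1 \<Longrightarrow> \<bar>f w k\<bar> \<le> \<bar>g w k\<bar>"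
  shows "LpH_norm M lam p s f \<le> LpH_norm M lam p s g"
  unfolding LpH_norm_as_lp_norm using assms by (intro lp_norm_mono AE_I2 Hdot_norm_mono) auto

lemma LpH_norm_Pi_dy_le: "LpH_norm M lam p s (Pi_dy j f) \<le> LpH_norm M lam p s f"
  by (rule LpH_norm_mono) (simp add: Pi_dy_def)

lemma LpH_norm_le_sum_blocks:
  assumes p: "1 \<le> p" and cm: "coeff_measurable M f"
  shows "LpH_norm M lam p s f \<le> (\<Sum>j. LpH_norm M lam p s (Pi_dy j f))"
proof -
  have "LpH_norm M lam p s f \<le> lp_norm M p (\<lambda>w. \<Sum>j. Hdot_norm lam s (Pi_dy j f w))"
    unfolding LpH_norm_as_lp_norm Pi_dy_eq_dyadic_block by (intro lp_norm_mono AE_I2 Hdot_norm_le_sum_blocks)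
  also have "\<dots> \<le> (\<Sum>j. LpH_norm M lam p s (Pi_dy j f))"
    unfolding LpH_norm_as_lp_norm using coeff_measurable_Pi_dy[OF cm] by (intro lp_norm_suminf p) auto
  finally show ?thesis .
qed

section \<open>Weyl asymptotics\<close>

lemma powr_le_max_endpoints:
  fixes m1 m2 mu r :: real
  assumes "0 < m1" "m1 \<le> mu" "mu \<le> m2"
  shows "mu powr r \<le> max (m1 powr r) (m2 powr r)"
proof (cases "0 \<le> r")
  case True then have "mu powr r \<le> m2 powr r" using assms by (intro powr_mono2) auto
  then show ?thesis by simp
next
  case False then have "mu powr r \<le> m1 powr r" using assms by (intro powr_mono2') auto
  then show ?thesis by simp
qed

lemma sqrt_powr: "0 < x \<Longrightarrow> sqrt (x powr s) = x powr (s/2)"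
  by (simp add: powr_half_sqrt[symmetric] powr_powr)

locale weyl_eigenvalues =
  fixes lam :: "nat \<Rightarrow> real" and d :: nat and c0 C0 :: real
  assumes d_pos: "1 \<le> d" and lam_1_pos: "0 < lam 1" and lam_mono: "\<And>k. k \<ge> 1 \<Longrightarrow> lam k \<le> lam (Suc k)"
    and c0: "0 < c0" and C0: "0 < C0"
    and weyl_law: "\<And>k. k \<ge> 1 \<Longrightarrow> c0 * real k powr (2/real d) \<le> lam k \<and> lam k \<le> C0 * real k powr (2/real d)"
begin

text \<open>By Weyl's law, lam k is comparable to G^(2j) on the j-th dyadic block 2^(j-1) \<le> k < 2^j;
  block_const t is the resulting uniform constant for the powers (lam k)^(t/2).\<close>

definition G :: real where "G = 2 powr (1 / real d)"

lemma G_gt_1: "1 < G"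
  using d_pos unfolding G_def by (intro gr_one_powr) auto

definition block_const :: "real \<Rightarrow> real" where
  "block_const t = max ((c0 * G powr (-2)) powr (t/2)) (C0 powr (t/2))"

lemma block_const_pos: "0 < block_const t"
  using C0 by (simp add: block_const_def less_max_iff_disj)

lemma lam_ge_lam_1: "k \<ge> 1 \<Longrightarrow> lam 1 \<le> lam k"
proof (induction k rule: dec_induct)
  case (step n) then show ?case using lam_mono[of n] by simp
qed simp

lemma lam_pos: "k \<ge> 1 \<Longrightarrow> 0 < lam k"
  using lam_ge_lam_1 lam_1_pos by (meson less_le_trans)

lemma lam_dyadic_bounds:
  assumes j: "j \<ge> 1" and k: "2 ^ (j - 1) \<le> k" "k < (2::nat) ^ j"
  shows "c0 * G powr (-2) \<le> lam k / G powr (2 * real j)" "lam k / G powr (2 * real j) \<le> C0"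
proof -
  have k1: "k \<ge> 1" using k(1) by (metis one_le_numeral one_le_power order_trans)
  have G: "0 < G" using G_gt_1 by simp
  have kp: "G powr (2 * real (j - 1)) \<le> real k powr (2 / real d)"
  proof -
    have "G powr (2 * real (j - 1)) = (real (2 ^ (j - 1))) powr (2 / real d)"
      unfolding G_def by (simp add: powr_powr powr_realpow[symmetric] algebra_simps)
    also have "\<dots> \<le> real k powr (2 / real d)" using k by (intro powr_mono2) auto
    finally show ?thesis .
  qed
  have kp2: "real k powr (2 / real d) \<le> G powr (2 * real j)"
  proof -
    have "real k powr (2 / real d) \<le> (real (2 ^ j)) powr (2 / real d)"
      using k k1 by (intro powr_mono2) auto
    also have "\<dots> = G powr (2 * real j)"
      unfolding G_def by (simp add: powr_powr powr_realpow[symmetric] algebra_simps)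
    finally show ?thesis .
  qed
  have "G powr (2 * real j) = G powr 2 * G powr (2 * real (j - 1))"
    using j by (simp add: powr_add[symmetric] algebra_simps of_nat_diff)
  then have "c0 * G powr (-2) * G powr (2 * real j) = c0 * G powr (2 * real (j - 1))"
    using G by (simp add: powr_minus field_simps)
  also have "\<dots> \<le> c0 * real k powr (2 / real d)" using kp c0 by simp
  also have "\<dots> \<le> lam k" using weyl_law[OF k1] by simp
  finally show "c0 * G powr (-2) \<le> lam k / G powr (2 * real j)" using G by (simp add: field_simps)
  have "lam k \<le> C0 * real k powr (2 / real d)" using weyl_law[OF k1] by simp
  also have "\<dots> \<le> C0 * G powr (2 * real j)" using kp2 C0 by simp
  finally show "lam k / G powr (2 * real j) \<le> C0" using G by (simp add: field_simps)
qed

lemma sqrt_lam_powr_dyadic_le: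
  assumes j: "j \<ge> 1" and k: "2 ^ (j - 1) \<le> k" "k < (2::nat) ^ j"
  shows "sqrt (lam k powr s) \<le> (block_const (s - s') * G powr (real j * (s - s'))) * sqrt (lam k powr s')"
proof -
  have k1: "k \<ge> 1" using k(1) by (metis one_le_numeral one_le_power order_trans)
  have lp: "0 < lam k" using lam_pos[OF k1] .
  have G: "0 < G" using G_gt_1 by simp
  define mu where "mu = lam k / G powr (2 * real j)"
  have mu: "c0 * G powr (-2) \<le> mu" "mu \<le> C0" using lam_dyadic_bounds[OF assms] by (auto simp: mu_def)
  have lmu: "lam k = G powr (2 * real j) * mu" using G by (simp add: mu_def)
  have mp: "0 < mu" using mu c0 G by (smt (verit) mult_pos_pos powr_gt_zero)
  have "sqrt (lam k powr s) = lam k powr ((s - s')/2) * sqrt (lam k powr s')"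
    using lp by (simp add: sqrt_powr powr_add[symmetric] diff_divide_distrib)
  also have "lam k powr ((s - s')/2) = G powr (real j * (s - s')) * mu powr ((s - s')/2)"
    unfolding lmu using G mp by (simp add: powr_mult powr_powr)
  also have "mu powr ((s - s')/2) \<le> block_const (s - s')"
    unfolding block_const_def using mu c0 G by (intro powr_le_max_endpoints) auto
  finally show ?thesis using G by (simp add: mult_right_mono mult_left_mono mult.assoc mult.left_commute)
qed

lemma Hdot_norm_block_change_exponent:
  assumes j: "j \<ge> 1"
  shows "Hdot_norm lam s (dyadic_block j u) \<le> ennreal (block_const (s - s') * G powr (real j * (s - s'))) * Hdot_norm lam s' (dyadic_block j u)"
proof (rule Hdot_norm_le_cmult)
  show "0 \<le> block_const (s - s') * G powr (real j * (s - s'))" using block_const_pos[of "s-s'"] by simp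
  fix k assume "k \<ge> 1" "dyadic_block j u k \<noteq> 0"
  then have "2 ^ (j - 1) \<le> k" "k < (2::nat) ^ j" by (auto simp: dyadic_block_def split: if_splits)
  then show "sqrt (lam k powr s) \<le> (block_const (s - s') * G powr (real j * (s - s'))) * sqrt (lam k powr s')"
    using sqrt_lam_powr_dyadic_le[OF j] by blast
qed

lemma Hdot_norm_minus_2_le:
  assumes "-2 \<le> s"
  shows "Hdot_norm lam (-2) u \<le> ennreal (lam 1 powr ((-2 - s)/2)) * Hdot_norm lam s u"
proof (rule Hdot_norm_le_cmult)
  show "0 \<le> lam 1 powr ((-2 - s)/2)" by simp
  fix k :: nat assume k: "k \<ge> 1"
  have lp: "0 < lam k" using lam_pos[OF k] .
  have "sqrt (lam k powr (-2)) = lam k powr ((-2 - s)/2) * sqrt (lam k powr s)"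
    using lp by (simp add: sqrt_powr powr_add[symmetric] diff_divide_distrib)
  also have "\<dots> \<le> lam 1 powr ((-2 - s)/2) * sqrt (lam k powr s)"
    using assms lam_1_pos lam_ge_lam_1[OF k] by (intro mult_right_mono powr_mono2') auto
  finally show "sqrt (lam k powr (-2)) \<le> lam 1 powr ((-2 - s)/2) * sqrt (lam k powr s)" .
qed

lemma LpH_norm_Pi_dy_change_exponent:
  assumes p: "1 \<le> p" and j: "j \<ge> 1" and cm: "coeff_measurable M f"
  shows "LpH_norm M lam p s (Pi_dy j f) \<le> ennreal (block_const (s - s') * G powr (real j * (s - s'))) * LpH_norm M lam p s' (Pi_dy j f)"
proof -
  have "(\<lambda>w. Hdot_norm lam s' (Pi_dy j f w)) \<in> borel_measurable M" using coeff_measurable_Pi_dy[OF cm, of j] by simp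
  then show ?thesis
    unfolding LpH_norm_as_lp_norm using block_const_pos[of "s - s'"]
    by (intro lp_norm_le_cmult p AE_I2) (auto simp: Pi_dy_eq_dyadic_block Hdot_norm_block_change_exponent[OF j])
qed

lemma LpH_norm_minus_2_le:
  assumes p: "1 \<le> p" and s: "-2 \<le> s" and cm: "coeff_measurable M f"
  shows "LpH_norm M lam p (-2) f \<le> ennreal (lam 1 powr ((-2 - s)/2)) * LpH_norm M lam p s f"
  unfolding LpH_norm_as_lp_norm using cm by (intro lp_norm_le_cmult p AE_I2 Hdot_norm_minus_2_le s) auto

end

section \<open>Discrete Hardy inequalities\<close>

definition K_method_norm :: "real \<Rightarrow> real \<Rightarrow> ennreal \<Rightarrow> (real \<Rightarrow> ennreal) \<Rightarrow> ennreal" where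
  "K_method_norm a \<theta> q K =
     lp_norm (count_space UNIV) q (\<lambda>m::int. ennreal (a powr (- real_of_int m * \<theta>)) * K (a powr real_of_int m))"

lemma nn_integral_int_le_two_sums:
  fixes f :: "int \<Rightarrow> ennreal"
  shows "(\<integral>\<^sup>+z. f z \<partial>count_space UNIV) \<le> (\<Sum>n. f (int n)) + (\<Sum>n. f (- int n))"
proof -
  have r: "(\<integral>\<^sup>+z. f z * indicator (range e) z \<partial>count_space UNIV) = (\<Sum>n. f (e n))"
    if inj: "inj e" and ne: "range e \<noteq> UNIV" for e :: "nat \<Rightarrow> int"
  proof -
    have "(\<integral>\<^sup>+z. f z * indicator (range e) z \<partial>count_space UNIV) = (\<integral>\<^sup>+z. f z \<partial>count_space (range e))"
      using ne by (simp add: nn_integral_count_space_indicator)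
    also have "\<dots> = (\<integral>\<^sup>+n. f (e n) \<partial>count_space UNIV)"
      using inj by (intro nn_integral_bij_count_space[symmetric]) (simp add: bij_betw_def)
    finally show ?thesis by (simp add: nn_integral_count_space_nat)
  qed
  have "(\<integral>\<^sup>+z. f z \<partial>count_space UNIV) \<le>
     (\<integral>\<^sup>+z. f z * indicator (range int) z + f z * indicator (range (\<lambda>n. - int n)) z \<partial>count_space UNIV)"
  proof (intro nn_integral_mono)
    fix z :: int
    show "f z \<le> f z * indicator (range int) z + f z * indicator (range (\<lambda>n. - int n)) z"
    proof (cases "0 \<le> z")
      case True then have "z \<in> range int" using nonneg_int_cases[of z] by blast
      then show ?thesis by (simp add: indicator_def)
    next
      case False then have "0 \<le> - z" by simp
      then obtain n where "- z = int n" using nonneg_int_cases[of "- z"] by blast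
      then have "z \<in> range (\<lambda>n. - int n)" by (intro image_eqI[of _ _ n]) auto
      then show ?thesis by (simp add: indicator_def)
    qed
  qed
  also have "\<dots> = (\<integral>\<^sup>+z. f z * indicator (range int) z \<partial>count_space UNIV)
       + (\<integral>\<^sup>+z. f z * indicator (range (\<lambda>n. - int n)) z \<partial>count_space UNIV)"
    by (rule nn_integral_add) auto
  also have "\<dots> = (\<Sum>n. f (int n)) + (\<Sum>n. f (- int n))"
  proof -
    have "(-1::int) \<notin> range int" "(1::int) \<notin> range (\<lambda>n. - int n)" by auto
    then have ne1: "range int \<noteq> UNIV" and ne2: "range (\<lambda>n. - int n) \<noteq> UNIV" by blast+
    show ?thesis using r[OF _ ne1] r[OF _ ne2] by (simp add: inj_def)
  qed
  finally show ?thesis .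
qed

lemma nn_integral_geometric_kernel_le:
  fixes a \<mu> :: real
  assumes a: "1 < a" and mu: "0 < \<mu>"
  shows "(\<integral>\<^sup>+z. ennreal (a powr (- \<mu> * \<bar>real_of_int z\<bar>)) \<partial>count_space UNIV)
       \<le> ennreal (2 / (1 - a powr (- \<mu>)))"
proof -
  define \<rho> where "\<rho> = a powr (- \<mu>)"
  have \<rho>: "0 < \<rho>" "\<rho> < 1" using a mu by (auto simp: \<rho>_def powr_less_one)
  have k: "a powr (- \<mu> * \<bar>real_of_int (int n)\<bar>) = \<rho> ^ n"
       "a powr (- \<mu> * \<bar>real_of_int (- int n)\<bar>) = \<rho> ^ n" for n
  proof -
    have "a powr - (\<mu> * real n) = (a powr - \<mu>) powr real n" using a by (simp add: powr_powr)
    also have "\<dots> = (a powr - \<mu>) ^ n" using a by (simp add: powr_realpow)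
    finally show "a powr (- \<mu> * \<bar>real_of_int (int n)\<bar>) = \<rho> ^ n"
       "a powr (- \<mu> * \<bar>real_of_int (- int n)\<bar>) = \<rho> ^ n" by (simp_all add: \<rho>_def)
  qed
  have k0: "a powr - (\<mu> * real n) = \<rho> ^ n" for n using k(1)[of n] by simp
  have s: "(\<Sum>n. ennreal (\<rho> ^ n)) = ennreal (1 / (1 - \<rho>))"
    using \<rho> by (intro suminf_ennreal_eq geometric_sums) auto
  have "(\<integral>\<^sup>+z. ennreal (a powr (- \<mu> * \<bar>real_of_int z\<bar>)) \<partial>count_space UNIV)
     \<le> (\<Sum>n. ennreal (\<rho> ^ n)) + (\<Sum>n. ennreal (\<rho> ^ n))"
    using nn_integral_int_le_two_sums[of "\<lambda>z. ennreal (a powr (- \<mu> * \<bar>real_of_int z\<bar>))"] by (simp add: k0)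
  also have "\<dots> = ennreal (2 / (1 - \<rho>))" using \<rho> by (simp add: s ennreal_plus[symmetric] del: ennreal_plus)
  finally show ?thesis by (simp add: \<rho>_def)
qed

lemma powr_change_base: fixes a B r :: real assumes "1 < a" "0 < B" shows "B powr r = a powr (ln B / ln a * r)"
proof -
  have "ln a > 0" using assms(1) by (rule ln_gt_zero)
  then have "ln B / ln a * r * ln a = r * ln B" by (simp add: field_simps)
  then show ?thesis using assms by (simp add: powr_def)
qed

lemma mod_eq_less_imp_add_le: assumes "(j::nat) < j'" "j mod L = j' mod L" shows "j + L \<le> j'"
proof -
  have "L dvd j' - j" using mod_eq_dvd_iff_nat[of j j' L] assms by simp
  then obtain c where c: "j' - j = L * c" by blast
  have "c \<noteq> 0" using c assms by (cases c) auto
  then have "L \<le> L * c" by simp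
  then show ?thesis using c assms by linarith
qed

lemma ex_nat_mult_ge_1:
  fixes \<gamma> :: real assumes "0 < \<gamma>"
  obtains L :: nat where "1 \<le> L" "1 \<le> real L * \<gamma>"
proof -
  obtain n :: nat where "1 / \<gamma> < real n" using reals_Archimedean2 by blast
  then have "1 \<le> real (n + 1) * \<gamma>" using assms by (simp add: field_simps)
  then show ?thesis by (intro that[of "n + 1"]) auto
qed

lemma inj_on_ceiling_residue_class:
  fixes \<gamma> :: real and L :: nat
  assumes g: "0 < \<gamma>" and L: "1 \<le> real L * \<gamma>"
  shows "inj_on (\<lambda>j::nat. \<lceil>- real j * \<gamma>\<rceil>) {j. j mod L = r}"
proof -
  have less: "\<lceil>- real j' * \<gamma>\<rceil> < \<lceil>- real j * \<gamma>\<rceil>" if "j < j'" "j mod L = j' mod L" for j j'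
  proof -
    have "j + L \<le> j'" using mod_eq_less_imp_add_le[OF that] .
    then have "real j + real L \<le> real j'" by linarith
    then have "real j * \<gamma> + real L * \<gamma> \<le> real j' * \<gamma>" using g
      by (metis distrib_right mult_right_mono less_imp_le of_nat_add)
    then have "- real j' * \<gamma> \<le> - real j * \<gamma> - 1" using L by linarith
    then have "\<lceil>- real j' * \<gamma>\<rceil> \<le> \<lceil>- real j * \<gamma> - 1\<rceil>" by (rule ceiling_mono)
    also have "\<dots> = \<lceil>- real j * \<gamma>\<rceil> - 1" by (simp add: ceiling_diff_one)
    finally show ?thesis by simp
  qed
  show ?thesis
  proof (rule inj_onI)
    fix j j' assume "j \<in> {j. j mod L = r}" "j' \<in> {j. j mod L = r}"
      "\<lceil>- real j * \<gamma>\<rceil> = \<lceil>- real j' * \<gamma>\<rceil>"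
    then show "j = j'" using less[of j j'] less[of j' j] by (cases j j' rule: linorder_cases) auto
  qed
qed

lemma inj_on_floor_residue_class:
  fixes \<gamma> :: real and L :: nat
  assumes g: "0 < \<gamma>" and L: "1 \<le> real L * \<gamma>"
  shows "inj_on (\<lambda>j::nat. \<lfloor>real j * \<gamma>\<rfloor>) {j. j mod L = r}"
proof -
  have less: "\<lfloor>real j * \<gamma>\<rfloor> < \<lfloor>real j' * \<gamma>\<rfloor>" if "j < j'" "j mod L = j' mod L" for j j'
  proof -
    have "j + L \<le> j'" using mod_eq_less_imp_add_le[OF that] .
    then have "real j + real L \<le> real j'" by linarith
    then have "real j * \<gamma> + real L * \<gamma> \<le> real j' * \<gamma>" using g
      by (metis distrib_right mult_right_mono less_imp_le of_nat_add)
    then have "real j * \<gamma> + 1 \<le> real j' * \<gamma>" using L by linarith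
    then have "\<lfloor>real j * \<gamma> + 1\<rfloor> \<le> \<lfloor>real j' * \<gamma>\<rfloor>" by (rule floor_mono)
    then show ?thesis by simp
  qed
  show ?thesis
  proof (rule inj_onI)
    fix j j' assume "j \<in> {j. j mod L = r}" "j' \<in> {j. j mod L = r}"
      "\<lfloor>real j * \<gamma>\<rfloor> = \<lfloor>real j' * \<gamma>\<rfloor>"
    then show "j = j'" using less[of j j'] less[of j' j] by (cases j j' rule: linorder_cases) auto
  qed
qed

lemma min_powr_le_kernel:
  fixes a \<theta> r \<mu> :: real and z :: int
  assumes a: "1 < a" and th: "0 < \<theta>" "\<theta> < 1" and mu: "\<mu> = min \<theta> (1 - \<theta>)"
    and z: "\<bar>real_of_int z\<bar> \<le> \<bar>r\<bar> + 1"
  shows "min (a powr (- \<theta> * r)) (a powr ((1 - \<theta>) * r)) \<le> a powr \<mu> * a powr (- \<mu> * \<bar>real_of_int z\<bar>)"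
proof -
  have m1: "\<mu> \<le> \<theta>" "\<mu> \<le> 1 - \<theta>" "0 < \<mu>" using mu th by auto
  have "min (a powr (- \<theta> * r)) (a powr ((1 - \<theta>) * r)) \<le> a powr (- \<mu> * \<bar>r\<bar>)"
  proof (cases "0 \<le> r")
    case True
    have "a powr (- \<theta> * r) \<le> a powr (- \<mu> * \<bar>r\<bar>)"
      using True m1 a by (intro powr_mono) (auto intro: mult_right_mono)
    then show ?thesis by simp
  next
    case False
    have "(1 - \<theta>) * r \<le> \<mu> * r" using False m1 by (intro mult_right_mono_neg) auto
    then have "a powr ((1 - \<theta>) * r) \<le> a powr (- \<mu> * \<bar>r\<bar>)"
      using False a by (intro powr_mono) auto
    then show ?thesis by simp
  qed
  also have "\<dots> \<le> a powr (\<mu> + - \<mu> * \<bar>real_of_int z\<bar>)"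
  proof (intro powr_mono)
    have "\<mu> * \<bar>real_of_int z\<bar> \<le> \<mu> * (\<bar>r\<bar> + 1)" using z m1 by (intro mult_left_mono) auto
    then show "- \<mu> * \<bar>r\<bar> \<le> \<mu> + - \<mu> * \<bar>real_of_int z\<bar>" by (simp add: algebra_simps)
  qed (use a in auto)
  also have "\<dots> = a powr \<mu> * a powr (- \<mu> * \<bar>real_of_int z\<bar>)" by (rule powr_add)
  finally show ?thesis .
qed

lemma abs_add_floor_le: "\<bar>real_of_int (m + \<lfloor>r\<rfloor>)\<bar> \<le> \<bar>real_of_int m + r\<bar> + 1"
proof -
  have "real_of_int \<lfloor>r\<rfloor> \<le> r" "r < real_of_int \<lfloor>r\<rfloor> + 1" by linarith+
  then show ?thesis by linarith
qed

lemma suminf_eq_convolution: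
  fixes k :: "int \<Rightarrow> real" and n :: "nat \<Rightarrow> int" and x :: "nat \<Rightarrow> ennreal"
  shows "(\<Sum>j. ennreal (k (m + n j)) * x j)
       = (\<integral>\<^sup>+z. ennreal (k z) * (\<Sum>j. if n j = z - m then x j else 0) \<partial>count_space UNIV)"
proof -
  have "(\<integral>\<^sup>+z. ennreal (k z) * (\<Sum>j. if n j = z - m then x j else 0) \<partial>count_space UNIV)
      = (\<integral>\<^sup>+z. (\<Sum>j. ennreal (k z) * (if z = m + n j then x j else 0)) \<partial>count_space UNIV)"
  proof (intro nn_integral_cong)
    fix z
    have "(\<lambda>j. if n j = z - m then x j else 0) = (\<lambda>j. if z = m + n j then x j else 0)" by (intro ext) auto
    then show "ennreal (k z) * (\<Sum>j. if n j = z - m then x j else 0) = (\<Sum>j. ennreal (k z) * (if z = m + n j then x j else 0))"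
      by simp
  qed
  also have "\<dots> = (\<Sum>j. \<integral>\<^sup>+z. ennreal (k z) * (if z = m + n j then x j else 0) \<partial>count_space UNIV)"
    by (rule nn_integral_suminf) auto
  also have "\<dots> = (\<Sum>j. ennreal (k (m + n j)) * x j)"
  proof (intro suminf_cong)
    fix j
    show "(\<integral>\<^sup>+z. ennreal (k z) * (if z = m + n j then x j else 0) \<partial>count_space UNIV) = ennreal (k (m + n j)) * x j"
    proof -
      have "(\<integral>\<^sup>+z. ennreal (k z) * (if z = m + n j then x j else 0) \<partial>count_space UNIV)
          = (\<Sum>z\<in>{m + n j}. ennreal (k z) * (if z = m + n j then x j else 0))"
        by (rule nn_integral_count_space') auto
      then show ?thesis by simp
    qed
  qed
  finally show ?thesis by simp
qed

text \<open>The lattice point a^m just above B^(-j) makes the maximum equal to 1, at the cost of a factor a^\<theta>.\<close>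

lemma le_K_at_lattice_point:
  fixes a B \<theta> D :: real and K :: "real \<Rightarrow> ennreal" and x :: ennreal
  assumes a: "1 < a" and B: "1 < B" and th: "0 < \<theta>" and D: "0 \<le> D"
    and x: "\<forall>t>0. x \<le> ennreal (D * B powr (real j * \<theta>) * max 1 (B powr (- real j) / t)) * K t"
  defines "m \<equiv> \<lceil>- real j * (ln B / ln a)\<rceil>"
  shows "x \<le> ennreal (D * a powr \<theta>) * (ennreal (a powr (- real_of_int m * \<theta>)) * K (a powr real_of_int m))"
proof -
  define \<gamma> where "\<gamma> = ln B / ln a"
  have Bp: "B powr r = a powr (\<gamma> * r)" for r using powr_change_base[of a B r] a B by (simp add: \<gamma>_def)
  define t where "t = a powr real_of_int m"
  have t: "0 < t" using a by (simp add: t_def)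
  have m1: "- real j * \<gamma> \<le> real_of_int m" and m2: "real_of_int m < - real j * \<gamma> + 1"
    unfolding m_def \<gamma>_def by linarith+
  have "B powr (- real j) = a powr (- real j * \<gamma>)" by (simp add: Bp mult.commute)
  also have "\<dots> \<le> t" unfolding t_def using a m1 by (intro powr_mono) auto
  finally have max1: "max 1 (B powr (- real j) / t) = 1" using t by simp
  have "B powr (real j * \<theta>) = a powr (\<gamma> * (real j * \<theta>))" by (rule Bp)
  also have "\<dots> \<le> a powr (\<theta> + (- real_of_int m * \<theta>))"
  proof (intro powr_mono)
    have "\<gamma> * real j < 1 - real_of_int m" using m2 by (simp add: algebra_simps)
    then have "\<gamma> * real j * \<theta> \<le> (1 - real_of_int m) * \<theta>" using th by (intro mult_right_mono) auto
    then show "\<gamma> * (real j * \<theta>) \<le> \<theta> + - real_of_int m * \<theta>" by (simp add: algebra_simps)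
  qed (use a in auto)
  also have "\<dots> = a powr \<theta> * a powr (- real_of_int m * \<theta>)" by (rule powr_add)
  finally have "D * B powr (real j * \<theta>) \<le> D * a powr \<theta> * a powr (- real_of_int m * \<theta>)"
    using D by (simp add: mult_left_mono mult.assoc)
  then have bound: "ennreal (D * B powr (real j * \<theta>)) * K t
      \<le> ennreal (D * a powr \<theta>) * ennreal (a powr (- real_of_int m * \<theta>)) * K t"
    using D by (intro mult_right_mono) (auto simp: ennreal_mult[symmetric] ennreal_leI)
  have "x \<le> ennreal (D * B powr (real j * \<theta>) * max 1 (B powr (- real j) / t)) * K t"
    using x t by blast
  also have "\<dots> \<le> ennreal (D * a powr \<theta>) * ennreal (a powr (- real_of_int m * \<theta>)) * K t"
    using bound by (simp add: max1)
  finally show ?thesis by (simp add: t_def mult.assoc)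
qed

lemma sequence_norm_le_K_method_norm:
  fixes a B \<theta> D :: real and q :: ennreal
  assumes a: "1 < a" and B: "1 < B" and th: "0 < \<theta>" and q: "1 \<le> q" and D: "0 \<le> D"
  shows "\<exists>C>0. \<forall>(x::nat \<Rightarrow> ennreal) (K::real \<Rightarrow> ennreal). x 0 = 0 \<longrightarrow>
     (\<forall>t>0. \<forall>j\<ge>1. x j \<le> ennreal (D * B powr (real j * \<theta>) * max 1 (B powr (- real j) / t)) * K t) \<longrightarrow>
     lp_norm (count_space UNIV) q x \<le> ennreal C * K_method_norm a \<theta> q K"
proof -
  define \<gamma> where "\<gamma> = ln B / ln a"
  have \<gamma>: "0 < \<gamma>" using a B by (simp add: \<gamma>_def ln_gt_zero)
  obtain L :: nat where L: "1 \<le> L" "1 \<le> real L * \<gamma>" using ex_nat_mult_ge_1[OF \<gamma>] .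
  define m where "m j = \<lceil>- real j * \<gamma>\<rceil>" for j :: nat
  define C where "C = (D + 1) * a powr \<theta> * real L"
  have C: "0 < C" using D L a by (simp add: C_def)
  show ?thesis
  proof (intro exI[of _ C] conjI C allI impI)
    fix x :: "nat \<Rightarrow> ennreal" and K :: "real \<Rightarrow> ennreal"
    assume x0: "x 0 = 0"
      and x: "\<forall>t>0. \<forall>j\<ge>1. x j \<le> ennreal (D * B powr (real j * \<theta>) * max 1 (B powr (- real j) / t)) * K t"
    define y where "y z = ennreal (a powr (- real_of_int z * \<theta>)) * K (a powr real_of_int z)" for z :: int
    have "x j \<le> ennreal (D * a powr \<theta>) * y (m j)" for j
    proof (cases "j = 0")
      case False
      then show ?thesis
        using le_K_at_lattice_point[OF a B th D, of "x j" j K] x by (simp add: y_def m_def \<gamma>_def)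
    qed (simp add: x0)
    then have "lp_norm (count_space UNIV) q x \<le> lp_norm (count_space UNIV) q (\<lambda>j. ennreal (D * a powr \<theta>) * y (m j))"
      by (intro lp_norm_mono AE_I2)
    also have "\<dots> \<le> ennreal (D * a powr \<theta>) * lp_norm (count_space UNIV) q (\<lambda>j. y (m j))"
      using D by (intro lp_norm_cmult q) auto
    also have "\<dots> \<le> ennreal (D * a powr \<theta>) * (of_nat L * lp_norm (count_space UNIV) q y)"
      unfolding m_def using inj_on_ceiling_residue_class[OF \<gamma> L(2)]
      by (intro mult_left_mono lp_norm_compose_le q L(1)) auto
    also have "\<dots> = ennreal (D * a powr \<theta> * real L) * lp_norm (count_space UNIV) q y"
      using D by (simp add: ennreal_mult ennreal_of_nat_eq_real_of_nat mult.assoc)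
    also have "\<dots> \<le> ennreal C * lp_norm (count_space UNIV) q y"
      unfolding C_def using a D by (intro mult_right_mono ennreal_leI) auto
    finally show "lp_norm (count_space UNIV) q x \<le> ennreal C * K_method_norm a \<theta> q K"
      by (simp add: K_method_norm_def y_def[abs_def])
  qed
qed

lemma lp_norm_convolution_le:
  fixes k :: "int \<Rightarrow> real" and X :: "int \<Rightarrow> ennreal"
  assumes q: "1 \<le> q" and k: "\<And>z. 0 \<le> k z"
  shows "lp_norm (count_space UNIV) q (\<lambda>m. \<integral>\<^sup>+z. ennreal (k z) * X (z - m) \<partial>count_space UNIV)
       \<le> (\<integral>\<^sup>+z. ennreal (k z) \<partial>count_space UNIV) * lp_norm (count_space UNIV) q X"
proof -
  have "lp_norm (count_space UNIV) q (\<lambda>m. \<integral>\<^sup>+z. ennreal (k z) * X (z - m) \<partial>count_space UNIV)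
      \<le> (\<integral>\<^sup>+z. lp_norm (count_space UNIV) q (\<lambda>m. ennreal (k z) * X (z - m)) \<partial>count_space UNIV)"
    by (intro lp_norm_nn_integral_int q) auto
  also have "\<dots> \<le> (\<integral>\<^sup>+z. ennreal (k z) * lp_norm (count_space UNIV) q X \<partial>count_space UNIV)"
  proof (intro nn_integral_mono)
    fix z :: int
    have "bij (\<lambda>m::int. z - m)" by (rule bij_betwI[where g="\<lambda>m. z - m"]) auto
    then have "lp_norm (count_space UNIV) q (\<lambda>m. X (z - m)) = lp_norm (count_space UNIV) q X"
      by (rule lp_norm_bij[OF q])
    moreover have "lp_norm (count_space UNIV) q (\<lambda>m. ennreal (k z) * X (z - m))
        \<le> ennreal (k z) * lp_norm (count_space UNIV) q (\<lambda>m. X (z - m))"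
      by (intro lp_norm_cmult q) (auto simp: k)
    ultimately show "lp_norm (count_space UNIV) q (\<lambda>m. ennreal (k z) * X (z - m))
        \<le> ennreal (k z) * lp_norm (count_space UNIV) q X" by simp
  qed
  also have "\<dots> = (\<integral>\<^sup>+z. ennreal (k z) \<partial>count_space UNIV) * lp_norm (count_space UNIV) q X"
    by (rule nn_integral_multc) auto
  finally show ?thesis .
qed

text \<open>With r = m + j ln B / ln a the weights combine to min (a^(-\<theta> r)) (a^((1-\<theta>) r)),
  which decays geometrically in |r|.\<close>

lemma K_sample_le_kernel_sum:
  fixes a B \<theta> D :: real and m :: int and K :: "real \<Rightarrow> ennreal" and x :: "nat \<Rightarrow> ennreal"
  assumes a: "1 < a" and B: "1 < B" and th: "0 < \<theta>" "\<theta> < 1" and D: "0 \<le> D"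
    and K: "K (a powr real_of_int m)
      \<le> (\<Sum>j. ennreal (D * min (B powr (- real j * \<theta>)) (a powr real_of_int m * B powr (real j * (1 - \<theta>)))) * x j)"
  defines "\<mu> \<equiv> min \<theta> (1 - \<theta>)" and "\<gamma> \<equiv> ln B / ln a"
  shows "ennreal (a powr (- real_of_int m * \<theta>)) * K (a powr real_of_int m)
     \<le> ennreal (D * a powr \<mu>) * (\<Sum>j. ennreal (a powr (- \<mu> * \<bar>real_of_int (m + \<lfloor>real j * \<gamma>\<rfloor>)\<bar>)) * x j)"
proof -
  have Bp: "B powr r = a powr (\<gamma> * r)" for r using powr_change_base[of a B r] a B by (simp add: \<gamma>_def)
  have term_le: "a powr (- real_of_int m * \<theta>) * (D * min (B powr (- real j * \<theta>)) (a powr real_of_int m * B powr (real j * (1 - \<theta>))))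
      \<le> D * a powr \<mu> * a powr (- \<mu> * \<bar>real_of_int (m + \<lfloor>real j * \<gamma>\<rfloor>)\<bar>)" for j
  proof -
    define r where "r = real_of_int m + real j * \<gamma>"
    have "a powr (- real_of_int m * \<theta>) * min (B powr (- real j * \<theta>)) (a powr real_of_int m * B powr (real j * (1 - \<theta>)))
        = min (a powr (- \<theta> * r)) (a powr ((1 - \<theta>) * r))"
      by (simp add: min_mult_distrib_left Bp r_def powr_add[symmetric] algebra_simps)
    also have "\<dots> \<le> a powr \<mu> * a powr (- \<mu> * \<bar>real_of_int (m + \<lfloor>real j * \<gamma>\<rfloor>)\<bar>)"
      using abs_add_floor_le[of m "real j * \<gamma>"] by (intro min_powr_le_kernel[OF a th \<mu>_def[THEN meta_eq_to_obj_eq]]) (simp add: r_def)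
    finally show ?thesis using D by (simp add: mult_left_mono mult.assoc mult.left_commute)
  qed
  have "ennreal (a powr (- real_of_int m * \<theta>)) * K (a powr real_of_int m)
      \<le> (\<Sum>j. ennreal (a powr (- real_of_int m * \<theta>)) *
          (ennreal (D * min (B powr (- real j * \<theta>)) (a powr real_of_int m * B powr (real j * (1 - \<theta>)))) * x j))"
    using K by (simp add: mult_left_mono)
  also have "\<dots> \<le> (\<Sum>j. ennreal (D * a powr \<mu>) * (ennreal (a powr (- \<mu> * \<bar>real_of_int (m + \<lfloor>real j * \<gamma>\<rfloor>)\<bar>)) * x j))"
    unfolding mult.assoc[symmetric] ennreal_mult'[symmetric]
    using term_le D by (intro suminf_le summableI mult_right_mono ennreal_leI) (auto simp: ennreal_mult[symmetric])
  finally show ?thesis by simp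
qed

lemma K_method_norm_le_sequence_norm:
  fixes a B \<theta> D :: real and q :: ennreal
  assumes a: "1 < a" and B: "1 < B" and th: "0 < \<theta>" "\<theta> < 1" and q: "1 \<le> q" and D: "0 \<le> D"
  shows "\<exists>C>0. \<forall>(x::nat \<Rightarrow> ennreal) (K::real \<Rightarrow> ennreal).
     (\<forall>t>0. K t \<le> (\<Sum>j. ennreal (D * min (B powr (- real j * \<theta>)) (t * B powr (real j * (1 - \<theta>)))) * x j)) \<longrightarrow>
     K_method_norm a \<theta> q K \<le> ennreal C * lp_norm (count_space UNIV) q x"
proof -
  define \<gamma> where "\<gamma> = ln B / ln a"
  have \<gamma>: "0 < \<gamma>" using a B by (simp add: \<gamma>_def ln_gt_zero)
  obtain L :: nat where L: "1 \<le> L" "1 \<le> real L * \<gamma>" using ex_nat_mult_ge_1[OF \<gamma>] .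
  define \<mu> where "\<mu> = min \<theta> (1 - \<theta>)"
  have \<mu>: "0 < \<mu>" using th by (simp add: \<mu>_def)
  define kern where "kern z = a powr (- \<mu> * \<bar>real_of_int z\<bar>)" for z :: int
  define n where "n j = \<lfloor>real j * \<gamma>\<rfloor>" for j :: nat
  define S where "S = 2 / (1 - a powr (- \<mu>))"
  have S: "0 < S" using a \<mu> by (simp add: S_def powr_less_one)
  define C where "C = (D + 1) * a powr \<mu> * S * real L"
  have C: "0 < C" using D L a S by (simp add: C_def)
  show ?thesis
  proof (intro exI[of _ C] conjI C allI impI)
    fix x :: "nat \<Rightarrow> ennreal" and K :: "real \<Rightarrow> ennreal"
    assume K: "\<forall>t>0. K t \<le> (\<Sum>j. ennreal (D * min (B powr (- real j * \<theta>)) (t * B powr (real j * (1 - \<theta>)))) * x j)"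
    define X where "X l = (\<Sum>j. if n j = l then x j else 0)" for l :: int
    have "ennreal (a powr (- real_of_int m * \<theta>)) * K (a powr real_of_int m)
        \<le> ennreal (D * a powr \<mu>) * (\<integral>\<^sup>+z. ennreal (kern z) * X (z - m) \<partial>count_space UNIV)" for m
    proof -
      have "ennreal (a powr (- real_of_int m * \<theta>)) * K (a powr real_of_int m)
          \<le> ennreal (D * a powr \<mu>) * (\<Sum>j. ennreal (kern (m + n j)) * x j)"
        using K_sample_le_kernel_sum[OF a B th D, of K m x] K a
        by (simp add: kern_def n_def \<mu>_def \<gamma>_def)
      also have "(\<Sum>j. ennreal (kern (m + n j)) * x j) = (\<integral>\<^sup>+z. ennreal (kern z) * X (z - m) \<partial>count_space UNIV)"
        unfolding X_def by (rule suminf_eq_convolution)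
      finally show ?thesis .
    qed
    then have "K_method_norm a \<theta> q K \<le> lp_norm (count_space UNIV) q
        (\<lambda>m. ennreal (D * a powr \<mu>) * (\<integral>\<^sup>+z. ennreal (kern z) * X (z - m) \<partial>count_space UNIV))"
      unfolding K_method_norm_def by (intro lp_norm_mono AE_I2)
    also have "\<dots> \<le> ennreal (D * a powr \<mu>) *
        ((\<integral>\<^sup>+z. ennreal (kern z) \<partial>count_space UNIV) * lp_norm (count_space UNIV) q X)"
      using D lp_norm_convolution_le[OF q, of kern X]
      by (intro order_trans[OF lp_norm_cmult[OF q]] mult_left_mono) (auto simp: kern_def)
    also have "\<dots> \<le> ennreal (D * a powr \<mu>) * (ennreal S * (of_nat L * lp_norm (count_space UNIV) q x))"
    proof (intro mult_left_mono mult_mono)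
      show "(\<integral>\<^sup>+z. ennreal (kern z) \<partial>count_space UNIV) \<le> ennreal S"
        unfolding kern_def S_def by (rule nn_integral_geometric_kernel_le[OF a \<mu>])
      show "lp_norm (count_space UNIV) q X \<le> of_nat L * lp_norm (count_space UNIV) q x"
        unfolding X_def[abs_def] n_def using inj_on_floor_residue_class[OF \<gamma> L(2)]
        by (intro lp_norm_pushforward_le q L(1)) auto
    qed auto
    also have "\<dots> = ennreal (D * a powr \<mu> * S * real L) * lp_norm (count_space UNIV) q x"
      using D S by (simp add: ennreal_mult ennreal_of_nat_eq_real_of_nat mult.assoc)
    also have "\<dots> \<le> ennreal C * lp_norm (count_space UNIV) q x"
      unfolding C_def using D S a by (intro mult_right_mono ennreal_leI) auto
    finally show "K_method_norm a \<theta> q K \<le> ennreal C * lp_norm (count_space UNIV) q x" .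
  qed
qed

section \<open>Bounds for the \<open>K\<close>-functional\<close>

lemma interp_norm_eq_K_method_norm:
  "interp_norm a X0 X1 \<theta> q f = K_method_norm a \<theta> q (\<lambda>t. K_fun X0 X1 t f)"
  unfolding interp_norm_def K_method_norm_def lp_norm_def ess_sup_enn_count_space by simp

lemma BLpH_norm_as_lp_norm:
  assumes p: "1 \<le> p"
  shows "BLpH_norm M lam q p s v = lp_norm (count_space UNIV) q (\<lambda>j. LpH_norm M lam p s (Pi_dy j v))"
proof -
  define g where "g j = LpH_norm M lam p s (Pi_dy j v)" for j
  have g0: "g 0 = 0" using p by (simp add: g_def Pi_dy_0 LpH_norm_zero)
  show ?thesis
  proof (cases "q = top")
    case True
    have "(SUP j\<in>{1..}. g j) = (SUP j. g j)"
    proof (rule antisym)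
      show "(SUP j\<in>{1..}. g j) \<le> (SUP j. g j)" by (rule SUP_mono) auto
      show "(SUP j. g j) \<le> (SUP j\<in>{1..}. g j)"
      proof (rule SUP_least)
        fix j show "g j \<le> (SUP j\<in>{1..}. g j)"
          by (cases "j = 0") (auto simp: g0 intro: SUP_upper)
      qed
    qed
    then show ?thesis using True by (simp add: BLpH_norm_def lp_norm_def ess_sup_enn_count_space g_def)
  next
    case False
    have "(\<Sum>j. epow (g (Suc j)) (enn2real q)) = (\<Sum>j. epow (g j) (enn2real q))"
    proof -
      have "(\<lambda>j. epow (g (Suc j)) (enn2real q)) sums (\<Sum>j. epow (g (Suc j)) (enn2real q))"
        by (rule summable_sums[OF summableI])
      then have "(\<lambda>j. epow (g j) (enn2real q)) sums ((\<Sum>j. epow (g (Suc j)) (enn2real q)) + epow (g 0) (enn2real q))"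
        by (rule sums_Suc)
      then show ?thesis by (simp add: sums_iff g0 epow_def)
    qed
    then show ?thesis using False
      by (simp add: BLpH_norm_def lp_norm_def g_def nn_integral_count_space_nat)
  qed
qed

lemma Least_powr_neg_le_iff:
  fixes B t :: real assumes B: "1 < B" and t: "0 < t"
  shows "(LEAST J. B powr (- real J) \<le> t) \<le> j \<longleftrightarrow> B powr (- real j) \<le> t"
proof -
  obtain n :: nat where n: "1/t < B ^ n" using real_arch_pow[OF B] by blast
  have "B powr (- real n) = 1 / B ^ n" using B by (simp add: powr_minus powr_realpow divide_inverse)
  also have "\<dots> \<le> t" using n t B by (simp add: field_simps)
  finally have J: "B powr (- real (LEAST J. B powr (- real J) \<le> t)) \<le> t" by (rule LeastI)
  show ?thesis
  proof
    assume "(LEAST J. B powr (- real J) \<le> t) \<le> j"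
    then have "B powr (- real j) \<le> B powr (- real (LEAST J. B powr (- real J) \<le> t))"
      using B by (intro powr_mono) auto
    with J show "B powr (- real j) \<le> t" by simp
  qed (rule Least_le)
qed

lemma split_sum_le_min_sum:
  fixes B \<theta> t c0 c1 D :: real and x y0 y1 :: "nat \<Rightarrow> ennreal"
  assumes t: "0 < t" and c: "0 \<le> c0" "0 \<le> c1" "c0 \<le> D" "c1 \<le> D"
    and J: "\<And>j. J \<le> j \<longleftrightarrow> B powr (- real j) \<le> t"
    and y0: "\<And>j. y0 j \<le> ennreal (c0 * B powr (- real j * \<theta>)) * x j"
    and y1: "\<And>j. y1 j \<le> ennreal (c1 * B powr (real j * (1 - \<theta>))) * x j"
  shows "(\<Sum>j. if J \<le> j then y0 j else 0) + ennreal t * (\<Sum>j. if j < J then y1 j else 0)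
     \<le> (\<Sum>j. ennreal (D * min (B powr (- real j * \<theta>)) (t * B powr (real j * (1 - \<theta>)))) * x j)"
proof -
  define w where "w j = D * min (B powr (- real j * \<theta>)) (t * B powr (real j * (1 - \<theta>)))" for j
  have eq: "B powr (- real j * \<theta>) = B powr (- real j) * B powr (real j * (1 - \<theta>))" for j
    by (simp add: powr_add[symmetric] algebra_simps)
  have high: "c0 * B powr (- real j * \<theta>) \<le> w j" if "J \<le> j" for j
  proof -
    have "B powr (- real j * \<theta>) \<le> t * B powr (real j * (1 - \<theta>))"
      using J[of j] that unfolding eq by (intro mult_right_mono) auto
    then show ?thesis using c by (simp add: w_def min_absorb1 mult_right_mono)
  qed
  have low: "t * (c1 * B powr (real j * (1 - \<theta>))) \<le> w j" if "\<not> J \<le> j" for j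
  proof -
    have "t * B powr (real j * (1 - \<theta>)) \<le> B powr (- real j * \<theta>)"
      using J[of j] that unfolding eq by (intro mult_right_mono) auto
    then show ?thesis using c t by (simp add: w_def min_absorb2 mult.left_commute mult_right_mono)
  qed
  have "(\<Sum>j. if J \<le> j then y0 j else 0) + ennreal t * (\<Sum>j. if j < J then y1 j else 0)
      = (\<Sum>j. (if J \<le> j then y0 j else 0) + ennreal t * (if j < J then y1 j else 0))"
    by (simp only: ennreal_suminf_cmult[symmetric] suminf_add[OF summableI summableI])
  also have "\<dots> \<le> (\<Sum>j. ennreal (w j) * x j)"
  proof (intro suminf_le summableI)
    fix j
    show "(if J \<le> j then y0 j else 0) + ennreal t * (if j < J then y1 j else 0) \<le> ennreal (w j) * x j"
    proof (cases "J \<le> j")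
      case True
      have "y0 j \<le> ennreal (w j) * x j"
        using high[OF True] by (intro order_trans[OF y0] mult_right_mono ennreal_leI) auto
      then show ?thesis using True by simp
    next
      case False
      have "ennreal t * y1 j \<le> ennreal (t * (c1 * B powr (real j * (1 - \<theta>)))) * x j"
        using y1[of j] t c by (simp add: ennreal_mult mult.assoc mult_left_mono)
      also have "\<dots> \<le> ennreal (w j) * x j" using low[OF False] by (intro mult_right_mono ennreal_leI) auto
      finally show ?thesis using False by simp
    qed
  qed
  finally show ?thesis by (simp add: w_def)
qed

text \<open>The unused index 0 is put into the high modes, so that the two parts always add up to f.\<close>

definition high_modes :: "nat \<Rightarrow> ('w \<Rightarrow> nat \<Rightarrow> real) \<Rightarrow> ('w \<Rightarrow> nat \<Rightarrow> real)" where
  "high_modes J f = (\<lambda>w k. if k = 0 \<or> 2 ^ (J - 1) \<le> k then f w k else 0)"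

definition low_modes :: "nat \<Rightarrow> ('w \<Rightarrow> nat \<Rightarrow> real) \<Rightarrow> ('w \<Rightarrow> nat \<Rightarrow> real)" where
  "low_modes J f = (\<lambda>w k. if k \<noteq> 0 \<and> k < 2 ^ (J - 1) then f w k else 0)"

lemma high_modes_add_low_modes: "(\<lambda>w k. high_modes J f w k + low_modes J f w k) = f"
  by (auto simp: high_modes_def low_modes_def fun_eq_iff)

lemma dyadic_block_cut:
  assumes "2 ^ (j - 1) \<le> k" "k < (2::nat) ^ j"
  shows "2 ^ (J - 1) \<le> k \<longleftrightarrow> J \<le> j" "k \<noteq> 0"
proof -
  show "k \<noteq> 0" using assms(1) by (metis le_zero_eq power_not_zero zero_neq_numeral)
  have j: "j \<ge> 1" using assms by (cases j) auto
  show "2 ^ (J - 1) \<le> k \<longleftrightarrow> J \<le> j"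
  proof
    assume "J \<le> j"
    then have "(2::nat) ^ (J - 1) \<le> 2 ^ (j - 1)" by (intro power_increasing) auto
    then show "2 ^ (J - 1) \<le> k" using assms by linarith
  next
    assume h: "2 ^ (J - 1) \<le> k"
    show "J \<le> j"
    proof (rule ccontr)
      assume "\<not> J \<le> j"
      then have "(2::nat) ^ j \<le> 2 ^ (J - 1)" by (intro power_increasing) auto
      then show False using h assms by linarith
    qed
  qed
qed

lemma Pi_dy_high_modes: "Pi_dy j (high_modes J f) = (if J \<le> j then Pi_dy j f else (\<lambda>w k. 0))"
  using dyadic_block_cut by (auto simp: Pi_dy_def high_modes_def fun_eq_iff)

lemma Pi_dy_low_modes: "Pi_dy j (low_modes J f) = (if j < J then Pi_dy j f else (\<lambda>w k. 0))"
proof -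
  have "Pi_dy j (low_modes J f) w k = (if j < J then Pi_dy j f else (\<lambda>w k. 0)) w k" for w k
  proof (cases "2 ^ (j - 1) \<le> k \<and> k < (2::nat) ^ j")
    case True
    then have "k \<noteq> 0" "k < 2 ^ (J - 1) \<longleftrightarrow> j < J" using dyadic_block_cut(1)[of j k J] dyadic_block_cut(2)[of j k] by auto
    then show ?thesis using True by (simp add: Pi_dy_def low_modes_def)
  qed (auto simp: Pi_dy_def low_modes_def)
  then show ?thesis by (simp add: fun_eq_iff)
qed

lemma coeff_measurable_high_modes: "coeff_measurable M f \<Longrightarrow> coeff_measurable M (high_modes J f)"
  unfolding high_modes_def by (rule coeff_measurable_restrict)

lemma coeff_measurable_low_modes: "coeff_measurable M f \<Longrightarrow> coeff_measurable M (low_modes J f)"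
  unfolding low_modes_def by (rule coeff_measurable_restrict)

lemma LpH_norm_high_modes_le:
  assumes p: "1 \<le> p" and cm: "coeff_measurable M f"
  shows "LpH_norm M lam p s (high_modes J f) \<le> (\<Sum>j. if J \<le> j then LpH_norm M lam p s (Pi_dy j f) else 0)"
  using LpH_norm_le_sum_blocks[OF p coeff_measurable_high_modes[OF cm], of lam s J] by (simp add: Pi_dy_high_modes LpH_norm_zero[OF p] if_distrib cong: if_cong)

lemma LpH_norm_low_modes_le:
  assumes p: "1 \<le> p" and cm: "coeff_measurable M f"
  shows "LpH_norm M lam p s (low_modes J f) \<le> (\<Sum>j. if j < J then LpH_norm M lam p s (Pi_dy j f) else 0)"
  using LpH_norm_le_sum_blocks[OF p coeff_measurable_low_modes[OF cm], of lam s J] by (simp add: Pi_dy_low_modes LpH_norm_zero[OF p] if_distrib cong: if_cong)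

lemma K_fun_le_split:
  assumes t: "0 < t"
    and h0: "S0 < top \<Longrightarrow> high_modes J f \<in> fst X0 \<and> snd X0 (high_modes J f) \<le> S0"
    and h1: "S1 < top \<Longrightarrow> low_modes J f \<in> fst X1 \<and> snd X1 (low_modes J f) \<le> S1"
  shows "K_fun X0 X1 t f \<le> S0 + ennreal t * S1"
proof (cases "S0 + ennreal t * S1 = top")
  case True then show ?thesis by (metis top_greatest)
next
  case False
  then have S0: "S0 < top" and tS1: "ennreal t * S1 < top" by (auto simp: top_unique less_top)
  have S1: "S1 < top"
  proof (rule ccontr)
    assume "\<not> S1 < top"
    then have "S1 = top" using top.not_eq_extremum by blast
    then have "ennreal t * S1 = top" using t by (simp add: ennreal_mult_top)
    with tS1 show False by simp
  qed
  note A = h0[OF S0] and Bb = h1[OF S1]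
  have "K_fun X0 X1 t f \<le> snd X0 (high_modes J f) + ennreal t * snd X1 (low_modes J f)"
    unfolding K_fun_def using A Bb high_modes_add_low_modes[of J f]
    by (intro INF_lower2[of "(high_modes J f, low_modes J f)"]) auto
  also have "\<dots> \<le> S0 + ennreal t * S1" using A Bb by (intro add_mono mult_left_mono) auto
  finally show ?thesis .
qed

definition block_bounded ::
    "'w measure \<Rightarrow> (nat \<Rightarrow> real) \<Rightarrow> ennreal \<Rightarrow> ('w \<Rightarrow> nat \<Rightarrow> real) nspace \<Rightarrow> real \<Rightarrow> bool" where
  "block_bounded M lam p X \<sigma> \<longleftrightarrow>
     (\<forall>g\<in>fst X. coeff_measurable M g \<and> (\<forall>j\<ge>1. LpH_norm M lam p \<sigma> (Pi_dy j g) \<le> snd X g))"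

context weyl_eigenvalues
begin

lemma Pi_dy_norm_le_K_fun:
  assumes p: "1 \<le> p" and j: "j \<ge> 1" and t: "0 < t"
    and X0: "block_bounded M lam p X0 s0" and X1: "block_bounded M lam p X1 s1"
  shows "LpH_norm M lam p s0 (Pi_dy j f)
     \<le> ennreal (max 1 (block_const (s0 - s1) * G powr (real j * (s0 - s1)) / t)) * K_fun X0 X1 t f"
proof -
  define E where "E = block_const (s0 - s1) * G powr (real j * (s0 - s1))"
  have E: "0 \<le> E" using block_const_pos[of "s0 - s1"] by (simp add: E_def)
  define m where "m = max 1 (E / t)"
  have m: "0 < m" "1 \<le> m" "E / t \<le> m" by (auto simp: m_def)
  show ?thesis unfolding K_fun_def E_def[symmetric] m_def[symmetric]
  proof (rule le_cmult_Inf[OF m(1)])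
    fix v assume "v \<in> (\<lambda>(f0, f1). snd X0 f0 + ennreal t * snd X1 f1) `
        {(f0, f1). f0 \<in> fst X0 \<and> f1 \<in> fst X1 \<and> f = (\<lambda>w k. f0 w k + f1 w k)}"
    then obtain f0 f1 where f0: "f0 \<in> fst X0" and f1: "f1 \<in> fst X1" and f: "f = (\<lambda>w k. f0 w k + f1 w k)"
      and v: "v = snd X0 f0 + ennreal t * snd X1 f1" by auto
    note c0 = X0[unfolded block_bounded_def, rule_format, OF f0]
      and c1 = X1[unfolded block_bounded_def, rule_format, OF f1]
    have "LpH_norm M lam p s0 (Pi_dy j f) \<le> LpH_norm M lam p s0 (Pi_dy j f0) + LpH_norm M lam p s0 (Pi_dy j f1)"
      unfolding f Pi_dy_add using c0 c1 by (intro LpH_norm_triangle p coeff_measurable_Pi_dy) auto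
    also have "\<dots> \<le> snd X0 f0 + ennreal E * LpH_norm M lam p s1 (Pi_dy j f1)"
      using c0 j LpH_norm_Pi_dy_change_exponent[OF p j, where f=f1 and s=s0 and s'=s1 and M=M] c1 by (intro add_mono) (auto simp: E_def)
    also have "\<dots> \<le> snd X0 f0 + ennreal E * snd X1 f1"
      using c1 j by (intro add_mono mult_left_mono) auto
    also have "\<dots> \<le> ennreal m * snd X0 f0 + ennreal m * (ennreal t * snd X1 f1)"
    proof (intro add_mono)
      show "snd X0 f0 \<le> ennreal m * snd X0 f0"
      proof -
        have "ennreal 1 * snd X0 f0 \<le> ennreal m * snd X0 f0" using m by (intro mult_right_mono ennreal_leI) auto
        then show ?thesis by simp
      qed
      have "ennreal E = ennreal (E / t) * ennreal t" using t E by (simp add: ennreal_mult[symmetric])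
      also have "\<dots> \<le> ennreal m * ennreal t" using m by (intro mult_right_mono ennreal_leI) auto
      finally show "ennreal E * snd X1 f1 \<le> ennreal m * (ennreal t * snd X1 f1)"
        by (simp add: mult.assoc[symmetric] mult_right_mono)
    qed
    also have "\<dots> = ennreal m * v" by (simp add: v distrib_left)
    finally show "LpH_norm M lam p s0 (Pi_dy j f) \<le> ennreal m * v" .
  qed
qed

end

section \<open>The interpolation identities\<close>

lemma mem_LpH_iff: "g \<in> LpH M lam p \<sigma> \<longleftrightarrow> coeff_measurable M g \<and> LpH_norm M lam p \<sigma> g < top"
  by (simp add: LpH_def)

lemma mem_BLpH_iff: "g \<in> BLpH M lam q p \<sigma> \<longleftrightarrow> g \<in> LpH M lam p (-2) \<and> BLpH_norm M lam q p \<sigma> g < top"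
  by (simp add: BLpH_def)

lemma BLpH_norm_infinity: "BLpH_norm M lam top p \<sigma> g = (SUP j\<in>{1..}. LpH_norm M lam p \<sigma> (Pi_dy j g))"
  by (simp add: BLpH_norm_def)

lemma LpH_add:
  assumes "1 \<le> p" "f \<in> LpH M lam p s" "g \<in> LpH M lam p s"
  shows "(\<lambda>w k. f w k + g w k) \<in> LpH M lam p s"
  using assms LpH_norm_triangle[OF assms(1), of M f g lam s]
  by (auto simp: mem_LpH_iff coeff_measurable_add intro: le_less_trans)

lemma high_modes_in_LpH: assumes "f \<in> LpH M lam p s" shows "high_modes J f \<in> LpH M lam p s"
proof -
  have "LpH_norm M lam p s (high_modes J f) \<le> LpH_norm M lam p s f"
    by (rule LpH_norm_mono) (simp add: high_modes_def)
  then show ?thesis using assms coeff_measurable_high_modes by (auto simp: mem_LpH_iff intro: le_less_trans)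
qed

lemma low_modes_in_LpH: assumes "f \<in> LpH M lam p s" shows "low_modes J f \<in> LpH M lam p s"
proof -
  have "LpH_norm M lam p s (low_modes J f) \<le> LpH_norm M lam p s f"
    by (rule LpH_norm_mono) (simp add: low_modes_def)
  then show ?thesis using assms coeff_measurable_low_modes by (auto simp: mem_LpH_iff intro: le_less_trans)
qed

lemma BLpH_norm_infinity_high_modes_le:
  assumes "1 \<le> p"
  shows "BLpH_norm M lam \<infinity> p s (high_modes J f) \<le> (\<Sum>j. if J \<le> j then LpH_norm M lam p s (Pi_dy j f) else 0)"
  unfolding infinity_ennreal_def BLpH_norm_infinity
proof (rule SUP_least)
  fix j
  show "LpH_norm M lam p s (Pi_dy j (high_modes J f)) \<le> (\<Sum>j. if J \<le> j then LpH_norm M lam p s (Pi_dy j f) else 0)"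
    using sum_le_suminf[OF summableI, of "{j}" "\<lambda>j. if J \<le> j then LpH_norm M lam p s (Pi_dy j f) else 0"]
    by (cases "J \<le> j") (simp_all add: Pi_dy_high_modes LpH_norm_zero[OF assms])
qed

lemma BLpH_norm_infinity_low_modes_le:
  assumes "1 \<le> p"
  shows "BLpH_norm M lam \<infinity> p s (low_modes J f) \<le> (\<Sum>j. if j < J then LpH_norm M lam p s (Pi_dy j f) else 0)"
  unfolding infinity_ennreal_def BLpH_norm_infinity
proof (rule SUP_least)
  fix j
  show "LpH_norm M lam p s (Pi_dy j (low_modes J f)) \<le> (\<Sum>j. if j < J then LpH_norm M lam p s (Pi_dy j f) else 0)"
    using sum_le_suminf[OF summableI, of "{j}" "\<lambda>j. if j < J then LpH_norm M lam p s (Pi_dy j f) else 0"]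
    by (cases "j < J") (simp_all add: Pi_dy_low_modes LpH_norm_zero[OF assms])
qed

lemma block_bounded_LpH: "block_bounded M lam p (LpH_sp M lam p \<sigma>) \<sigma>"
  by (auto simp: block_bounded_def LpH_sp_def mem_LpH_iff LpH_norm_Pi_dy_le)

lemma block_bounded_BLpH_infinity: "block_bounded M lam p (BLpH_sp M lam \<infinity> p \<sigma>) \<sigma>"
  by (auto simp: block_bounded_def BLpH_sp_def mem_BLpH_iff mem_LpH_iff BLpH_norm_infinity intro: SUP_upper)

lemma equiv_spaces_sym: "equiv_spaces X Y \<Longrightarrow> equiv_spaces Y X"
  unfolding equiv_spaces_def
proof (elim conjE exE)
  fix c C assume XY: "fst X = fst Y" and c: "0 < c" and C: "0 < C"
    and bounds: "\<forall>f\<in>fst X. ennreal c * snd X f \<le> snd Y f \<and> snd Y f \<le> ennreal C * snd X f"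
  have "\<forall>f\<in>fst Y. ennreal (1 / C) * snd Y f \<le> snd X f \<and> snd X f \<le> ennreal (1 / c) * snd Y f"
    using bounds XY ennreal_inverse_mult_le[OF C] ennreal_le_inverse_mult[OF c] by auto
  then show "fst Y = fst X \<and> (\<exists>c C. 0 < c \<and> 0 < C \<and>
      (\<forall>f\<in>fst Y. ennreal c * snd Y f \<le> snd X f \<and> snd X f \<le> ennreal C * snd Y f))"
    using XY c C by (intro conjI exI[of _ "1 / C"] exI[of _ "1 / c"]) auto
qed

lemma max_1_mult_le:
  fixes c x :: real assumes "0 \<le> c" "0 \<le> x" shows "max 1 (c * x) \<le> max 1 c * max 1 x"
proof -
  have "c * x \<le> max 1 c * max 1 x" using assms by (intro mult_mono) auto
  moreover have "1 * 1 \<le> max 1 c * max 1 x" by (intro mult_mono) auto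
  ultimately show ?thesis by simp
qed

locale interpolation_setting = weyl_eigenvalues +
  fixes M :: "'w measure" and p q :: ennreal and \<theta> s0 s1 a :: real
  assumes p1: "1 \<le> p" and q1: "1 \<le> q" and th0: "0 < \<theta>" and th1: "\<theta> < 1"
    and s0_ge: "-2 \<le> s0" and s0_less_s1: "s0 < s1" and a1: "1 < a"
begin

definition s_theta where "s_theta = (1 - \<theta>) * s0 + \<theta> * s1"
definition B where "B = G powr (s1 - s0)"

abbreviation N where "N \<sigma> g \<equiv> LpH_norm M lam p \<sigma> g"

definition cutoffs_bounded :: "('w \<Rightarrow> nat \<Rightarrow> real) nspace \<Rightarrow> ('w \<Rightarrow> nat \<Rightarrow> real) nspace \<Rightarrow> bool" where
  "cutoffs_bounded X0 X1 \<longleftrightarrow> (\<forall>f\<in>LpH M lam p (-2). \<forall>J.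
     ((\<Sum>j. if J \<le> j then N s0 (Pi_dy j f) else 0) < top \<longrightarrow> high_modes J f \<in> fst X0 \<and>
        snd X0 (high_modes J f) \<le> (\<Sum>j. if J \<le> j then N s0 (Pi_dy j f) else 0)) \<and>
     ((\<Sum>j. if j < J then N s1 (Pi_dy j f) else 0) < top \<longrightarrow> low_modes J f \<in> fst X1 \<and>
        snd X1 (low_modes J f) \<le> (\<Sum>j. if j < J then N s1 (Pi_dy j f) else 0)))"

lemma B_gt_1: "1 < B"
  unfolding B_def using G_gt_1 s0_less_s1 by (intro gr_one_powr) auto

lemma G_powr_eq_B_powr: "G powr (real j * (c * (s1 - s0))) = B powr (real j * c)"
  unfolding B_def using G_gt_1 by (simp add: powr_powr algebra_simps)

lemma Pi_dy_norm_s0_le: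
  assumes cm: "coeff_measurable M f"
  shows "N s0 (Pi_dy j f) \<le> ennreal (block_const (s0 - s_theta) * B powr (- real j * \<theta>)) * N s_theta (Pi_dy j f)"
proof (cases "j = 0")
  case False then show ?thesis
    using LpH_norm_Pi_dy_change_exponent[OF p1 _ cm, of j s0 s_theta] G_powr_eq_B_powr[of j "- \<theta>"]
    by (simp add: s_theta_def algebra_simps)
qed (use p1 in \<open>simp add: Pi_dy_0 LpH_norm_zero\<close>)

lemma Pi_dy_norm_s1_le:
  assumes cm: "coeff_measurable M f"
  shows "N s1 (Pi_dy j f) \<le> ennreal (block_const (s1 - s_theta) * B powr (real j * (1 - \<theta>))) * N s_theta (Pi_dy j f)"
proof (cases "j = 0")
  case False then show ?thesis
    using LpH_norm_Pi_dy_change_exponent[OF p1 _ cm, of j s1 s_theta] G_powr_eq_B_powr[of j "1 - \<theta>"]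
    by (simp add: s_theta_def algebra_simps)
qed (use p1 in \<open>simp add: Pi_dy_0 LpH_norm_zero\<close>)

lemma K_fun_le_block_sum:
  assumes X: "cutoffs_bounded X0 X1" and f: "f \<in> LpH M lam p (-2)" and t: "0 < t"
  shows "K_fun X0 X1 t f \<le> (\<Sum>j. ennreal (max (block_const (s0 - s_theta)) (block_const (s1 - s_theta)) *
            min (B powr (- real j * \<theta>)) (t * B powr (real j * (1 - \<theta>)))) * N s_theta (Pi_dy j f))"
proof -
  have cm: "coeff_measurable M f" using f by (simp add: mem_LpH_iff)
  define J where "J = (LEAST J. B powr (- real J) \<le> t)"
  have "K_fun X0 X1 t f \<le> (\<Sum>j. if J \<le> j then N s0 (Pi_dy j f) else 0)
      + ennreal t * (\<Sum>j. if j < J then N s1 (Pi_dy j f) else 0)"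
    using X f by (intro K_fun_le_split[OF t]) (auto simp: cutoffs_bounded_def)
  also have "\<dots> \<le> (\<Sum>j. ennreal (max (block_const (s0 - s_theta)) (block_const (s1 - s_theta)) *
      min (B powr (- real j * \<theta>)) (t * B powr (real j * (1 - \<theta>)))) * N s_theta (Pi_dy j f))"
    using block_const_pos[of "s0 - s_theta"] block_const_pos[of "s1 - s_theta"]
    using Least_powr_neg_le_iff[OF B_gt_1 t]
    by (intro split_sum_le_min_sum[OF t _ _ _ _ _ Pi_dy_norm_s0_le[OF cm] Pi_dy_norm_s1_le[OF cm]])
       (auto simp: J_def)
  finally show ?thesis .
qed

lemma block_norm_le_K_fun:
  assumes X0: "block_bounded M lam p X0 s0" and X1: "block_bounded M lam p X1 s1"
    and cm: "coeff_measurable M f" and t: "0 < t" and j: "j \<ge> 1"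
  shows "N s_theta (Pi_dy j f) \<le> ennreal (block_const (s_theta - s0) * max 1 (block_const (s0 - s1)) *
            B powr (real j * \<theta>) * max 1 (B powr (- real j) / t)) * K_fun X0 X1 t f"
proof -
  define c01 where "c01 = block_const (s0 - s1)"
  define c0 where "c0 = block_const (s_theta - s0)"
  have c: "0 < c01" "0 < c0" using block_const_pos by (auto simp: c01_def c0_def)
  have "N s_theta (Pi_dy j f) \<le> ennreal (c0 * B powr (real j * \<theta>)) * N s0 (Pi_dy j f)"
    using LpH_norm_Pi_dy_change_exponent[OF p1 j cm, of s_theta s0] G_powr_eq_B_powr[of j \<theta>]
    by (simp add: c0_def s_theta_def algebra_simps)
  also have "\<dots> \<le> ennreal (c0 * B powr (real j * \<theta>)) *
      (ennreal (max 1 (c01 * B powr (- real j) / t)) * K_fun X0 X1 t f)"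
    using Pi_dy_norm_le_K_fun[OF p1 j t X0 X1, of f] G_powr_eq_B_powr[of j "- 1"]
    by (intro mult_left_mono) (auto simp: c01_def algebra_simps)
  also have "\<dots> \<le> ennreal (c0 * max 1 c01 * B powr (real j * \<theta>) * max 1 (B powr (- real j) / t)) * K_fun X0 X1 t f"
  proof -
    have "max 1 (c01 * B powr (- real j) / t) \<le> max 1 c01 * max 1 (B powr (- real j) / t)"
      using max_1_mult_le[of c01 "B powr (- real j) / t"] c t by (simp only: times_divide_eq_right) simp
    then have "c0 * B powr (real j * \<theta>) * max 1 (c01 * B powr (- real j) / t)
        \<le> c0 * B powr (real j * \<theta>) * (max 1 c01 * max 1 (B powr (- real j) / t))"
      by (rule mult_left_mono) (use c in simp)
    also have "\<dots> = c0 * max 1 c01 * B powr (real j * \<theta>) * max 1 (B powr (- real j) / t)"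
      by (simp only: ac_simps)
    finally show ?thesis
      using c by (simp add: ennreal_mult[symmetric] mult.assoc[symmetric] mult_right_mono ennreal_leI)
  qed
  finally show ?thesis by (simp add: c0_def c01_def)
qed

lemma interp_norm_le_BLpH_norm:
  assumes "cutoffs_bounded X0 X1"
  obtains C where "0 < C" "\<And>f. f \<in> LpH M lam p (-2) \<Longrightarrow>
    interp_norm a X0 X1 \<theta> q f \<le> ennreal C * BLpH_norm M lam q p s_theta f"
proof -
  define D where "D = max (block_const (s0 - s_theta)) (block_const (s1 - s_theta))"
  have D: "0 \<le> D" using block_const_pos[of "s0 - s_theta"] by (simp add: D_def le_max_iff_disj less_imp_le)
  obtain C where "0 < C" and hardy: "\<And>x K.
     (\<forall>t>0. K t \<le> (\<Sum>j. ennreal (D * min (B powr (- real j * \<theta>)) (t * B powr (real j * (1 - \<theta>)))) * x j)) \<Longrightarrow>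
     K_method_norm a \<theta> q K \<le> ennreal C * lp_norm (count_space UNIV) q x"
    using K_method_norm_le_sequence_norm[OF a1 B_gt_1 th0 th1 q1 D] by blast
  show ?thesis
  proof (rule that[OF \<open>0 < C\<close>])
    fix f assume "f \<in> LpH M lam p (-2)"
    then show "interp_norm a X0 X1 \<theta> q f \<le> ennreal C * BLpH_norm M lam q p s_theta f"
      using hardy K_fun_le_block_sum[OF assms] unfolding D_def
      by (simp add: interp_norm_eq_K_method_norm BLpH_norm_as_lp_norm[OF p1])
  qed
qed

lemma BLpH_norm_le_interp_norm:
  assumes "block_bounded M lam p X0 s0" "block_bounded M lam p X1 s1"
  obtains C where "0 < C" "\<And>f. coeff_measurable M f \<Longrightarrow>
    BLpH_norm M lam q p s_theta f \<le> ennreal C * interp_norm a X0 X1 \<theta> q f"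
proof -
  define D where "D = block_const (s_theta - s0) * max 1 (block_const (s0 - s1))"
  have D: "0 \<le> D" using block_const_pos[of "s_theta - s0"] by (simp add: D_def)
  obtain C where "0 < C" and hardy: "\<And>x K. x 0 = 0 \<Longrightarrow>
     (\<forall>t>0. \<forall>j\<ge>1. x j \<le> ennreal (D * B powr (real j * \<theta>) * max 1 (B powr (- real j) / t)) * K t) \<Longrightarrow>
     lp_norm (count_space UNIV) q x \<le> ennreal C * K_method_norm a \<theta> q K"
    using sequence_norm_le_K_method_norm[OF a1 B_gt_1 th0 q1 D] by blast
  show ?thesis
  proof (rule that[OF \<open>0 < C\<close>])
    fix f assume "coeff_measurable M f"
    then show "BLpH_norm M lam q p s_theta f \<le> ennreal C * interp_norm a X0 X1 \<theta> q f"
      using hardy[of "\<lambda>j. N s_theta (Pi_dy j f)"] block_norm_le_K_fun[OF assms] p1 unfolding D_def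
      by (simp add: interp_norm_eq_K_method_norm BLpH_norm_as_lp_norm[OF p1] Pi_dy_0 LpH_norm_zero)
  qed
qed

lemma Pi_dy_norm_s0_le_BLpH_norm:
  assumes f: "f \<in> BLpH M lam q p s_theta"
  shows "N s0 (Pi_dy j f) \<le> ennreal (block_const (s0 - s_theta) * B powr (- real j * \<theta>)) * BLpH_norm M lam q p s_theta f"
proof -
  have cm: "coeff_measurable M f" using f by (simp add: mem_BLpH_iff mem_LpH_iff)
  have "N s_theta (Pi_dy j f) \<le> BLpH_norm M lam q p s_theta f"
    unfolding BLpH_norm_as_lp_norm[OF p1] by (rule lp_norm_component_le[OF q1])
  then show ?thesis using Pi_dy_norm_s0_le[OF cm, of j] by (meson mult_left_mono order_trans zero_le)
qed

lemma BLpH_subset_LpH_s0: "BLpH M lam q p s_theta \<subseteq> LpH M lam p s0"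
proof
  fix f assume f: "f \<in> BLpH M lam q p s_theta"
  have cm: "coeff_measurable M f" and fin: "BLpH_norm M lam q p s_theta f < top"
    using f by (auto simp: mem_BLpH_iff mem_LpH_iff)
  define r where "r = B powr (- \<theta>)"
  have r: "0 < r" "r < 1" using B_gt_1 th0 by (auto simp: r_def powr_less_one)
  have rj: "B powr (- real j * \<theta>) = r ^ j" for j
    using B_gt_1 by (simp add: r_def powr_realpow[symmetric] powr_powr mult.commute)
  define c where "c = block_const (s0 - s_theta)"
  have c: "0 < c" unfolding c_def by (rule block_const_pos)
  have "N s0 f \<le> (\<Sum>j. N s0 (Pi_dy j f))" by (rule LpH_norm_le_sum_blocks[OF p1 cm])
  also have "\<dots> \<le> (\<Sum>j. BLpH_norm M lam q p s_theta f * ennreal (c * r ^ j))"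
    using Pi_dy_norm_s0_le_BLpH_norm[OF f] rj by (intro suminf_le summableI) (simp_all add: c_def mult.commute)
  also have "\<dots> = BLpH_norm M lam q p s_theta f * (\<Sum>j. ennreal (c * r ^ j))"
    by (rule ennreal_suminf_cmult)
  also have "(\<Sum>j. ennreal (c * r ^ j)) = ennreal (c * (1 / (1 - r)))"
    using r c by (intro suminf_ennreal_eq sums_mult geometric_sums) auto
  also have "BLpH_norm M lam q p s_theta f * ennreal (c * (1 / (1 - r))) < top"
    using fin by (simp add: ennreal_mult_less_top)
  finally show "f \<in> LpH M lam p s0" using cm by (simp add: mem_LpH_iff)
qed

lemma BLpH_subset_BLpH_infinity_s0: "BLpH M lam q p s_theta \<subseteq> BLpH M lam \<infinity> p s0"
proof
  fix f assume f: "f \<in> BLpH M lam q p s_theta"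
  have fin: "BLpH_norm M lam q p s_theta f < top" using f by (simp add: mem_BLpH_iff)
  define c where "c = block_const (s0 - s_theta)"
  have c: "0 < c" unfolding c_def by (rule block_const_pos)
  have "BLpH_norm M lam \<infinity> p s0 f \<le> ennreal c * BLpH_norm M lam q p s_theta f"
    unfolding infinity_ennreal_def BLpH_norm_infinity
  proof (rule SUP_least)
    fix j
    have "B powr (- real j * \<theta>) \<le> 1" using powr_mono[of "- real j * \<theta>" 0 B] B_gt_1 th0 by simp
    then have "ennreal (c * B powr (- real j * \<theta>)) \<le> ennreal c"
      using c by (intro ennreal_leI mult_left_le) auto
    then show "N s0 (Pi_dy j f) \<le> ennreal c * BLpH_norm M lam q p s_theta f"
      using Pi_dy_norm_s0_le_BLpH_norm[OF f, of j] unfolding c_def[symmetric]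
      by (meson mult_right_mono order_trans zero_le)
  qed
  also have "\<dots> < top" using fin by (simp add: ennreal_mult_less_top)
  finally show "f \<in> BLpH M lam \<infinity> p s0" using f by (simp add: mem_BLpH_iff)
qed

lemma equiv_spaces_BLpH_interp_space:
  assumes X0: "block_bounded M lam p X0 s0" "fst X0 \<subseteq> LpH M lam p (-2)" "BLpH M lam q p s_theta \<subseteq> fst X0"
    and X1: "block_bounded M lam p X1 s1" "fst X1 \<subseteq> LpH M lam p (-2)" "(\<lambda>w k. 0) \<in> fst X1"
    and cutoffs: "cutoffs_bounded X0 X1"
  shows "equiv_spaces (BLpH_sp M lam q p s_theta) (interp_space a X0 X1 \<theta> q)"
proof -
  obtain CU where CU: "0 < CU" and upper: "\<And>f. f \<in> LpH M lam p (-2) \<Longrightarrow>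
      interp_norm a X0 X1 \<theta> q f \<le> ennreal CU * BLpH_norm M lam q p s_theta f"
    using interp_norm_le_BLpH_norm[OF cutoffs] by blast
  obtain CL where CL: "0 < CL" and lower: "\<And>f. coeff_measurable M f \<Longrightarrow>
      BLpH_norm M lam q p s_theta f \<le> ennreal CL * interp_norm a X0 X1 \<theta> q f"
    using BLpH_norm_le_interp_norm[OF X0(1) X1(1)] by blast
  have "BLpH M lam q p s_theta \<subseteq> fst (interp_space a X0 X1 \<theta> q)"
  proof
    fix f assume f: "f \<in> BLpH M lam q p s_theta"
    then have "f \<in> sum_space X0 X1"
      using X0(3) X1(3) unfolding sum_space_def by (intro CollectI bexI[of _ f] bexI[of _ "\<lambda>w k. 0"]) auto
    moreover have "interp_norm a X0 X1 \<theta> q f < top"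
      using f by (intro ennreal_le_cmult_less_top[OF upper]) (auto simp: mem_BLpH_iff)
    ultimately show "f \<in> fst (interp_space a X0 X1 \<theta> q)" by (simp add: interp_space_def)
  qed
  moreover have "fst (interp_space a X0 X1 \<theta> q) \<subseteq> BLpH M lam q p s_theta"
  proof
    fix f assume "f \<in> fst (interp_space a X0 X1 \<theta> q)"
    then obtain f0 f1 where "f0 \<in> fst X0" "f1 \<in> fst X1" and f: "f = (\<lambda>w k. f0 w k + f1 w k)"
      and fin: "interp_norm a X0 X1 \<theta> q f < top"
      by (auto simp: interp_space_def sum_space_def)
    then have "f \<in> LpH M lam p (-2)" using X0(2) X1(2) LpH_add[OF p1] by blast
    moreover have "BLpH_norm M lam q p s_theta f < top"
      using calculation fin by (intro ennreal_le_cmult_less_top[OF lower]) (auto simp: mem_LpH_iff)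
    ultimately show "f \<in> BLpH M lam q p s_theta" by (simp add: mem_BLpH_iff)
  qed
  moreover have "\<forall>f\<in>BLpH M lam q p s_theta.
      ennreal (1 / CL) * BLpH_norm M lam q p s_theta f \<le> interp_norm a X0 X1 \<theta> q f \<and>
      interp_norm a X0 X1 \<theta> q f \<le> ennreal CU * BLpH_norm M lam q p s_theta f"
    using ennreal_inverse_mult_le[OF CL lower] upper by (auto simp: mem_BLpH_iff mem_LpH_iff)
  ultimately show ?thesis
    using CL CU unfolding equiv_spaces_def BLpH_sp_def
    by (intro conjI exI[of _ "1 / CL"] exI[of _ CU]) (auto simp: interp_space_def)
qed

lemma LpH_subset_LpH_minus_2: assumes "-2 \<le> \<sigma>" shows "LpH M lam p \<sigma> \<subseteq> LpH M lam p (-2)"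
proof
  fix f assume "f \<in> LpH M lam p \<sigma>"
  then have cm: "coeff_measurable M f" and fin: "N \<sigma> f < top" by (simp_all add: mem_LpH_iff)
  have "N (-2) f < top" by (rule ennreal_le_cmult_less_top[OF LpH_norm_minus_2_le[OF p1 assms cm] fin])
  then show "f \<in> LpH M lam p (-2)" using cm by (simp add: mem_LpH_iff)
qed

lemma cutoffs_bounded_LpH: "cutoffs_bounded (LpH_sp M lam p s0) (LpH_sp M lam p s1)"
proof -
  have "high_modes J f \<in> LpH M lam p \<sigma> \<and> N \<sigma> (high_modes J f) \<le> (\<Sum>j. if J \<le> j then N \<sigma> (Pi_dy j f) else 0)"
    if "f \<in> LpH M lam p (-2)" "(\<Sum>j. if J \<le> j then N \<sigma> (Pi_dy j f) else 0) < top" for f J \<sigma>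
    using that LpH_norm_high_modes_le[OF p1, of M f lam \<sigma> J] coeff_measurable_high_modes[of M f J]
    by (auto simp: mem_LpH_iff intro: le_less_trans)
  moreover have "low_modes J f \<in> LpH M lam p \<sigma> \<and> N \<sigma> (low_modes J f) \<le> (\<Sum>j. if j < J then N \<sigma> (Pi_dy j f) else 0)"
    if "f \<in> LpH M lam p (-2)" "(\<Sum>j. if j < J then N \<sigma> (Pi_dy j f) else 0) < top" for f J \<sigma>
    using that LpH_norm_low_modes_le[OF p1, of M f lam \<sigma> J] coeff_measurable_low_modes[of M f J]
    by (auto simp: mem_LpH_iff intro: le_less_trans)
  ultimately show ?thesis by (simp add: cutoffs_bounded_def LpH_sp_def)
qed

lemma cutoffs_bounded_BLpH_infinity: "cutoffs_bounded (BLpH_sp M lam \<infinity> p s0) (BLpH_sp M lam \<infinity> p s1)"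
proof -
  have "high_modes J f \<in> BLpH M lam \<infinity> p \<sigma> \<and>
      BLpH_norm M lam \<infinity> p \<sigma> (high_modes J f) \<le> (\<Sum>j. if J \<le> j then N \<sigma> (Pi_dy j f) else 0)"
    if "f \<in> LpH M lam p (-2)" "(\<Sum>j. if J \<le> j then N \<sigma> (Pi_dy j f) else 0) < top" for f J \<sigma>
    using that BLpH_norm_infinity_high_modes_le[OF p1, of M lam \<sigma> J f] high_modes_in_LpH[of f M lam p "-2" J]
    by (auto simp: mem_BLpH_iff intro: le_less_trans)
  moreover have "low_modes J f \<in> BLpH M lam \<infinity> p \<sigma> \<and>
      BLpH_norm M lam \<infinity> p \<sigma> (low_modes J f) \<le> (\<Sum>j. if j < J then N \<sigma> (Pi_dy j f) else 0)"
    if "f \<in> LpH M lam p (-2)" "(\<Sum>j. if j < J then N \<sigma> (Pi_dy j f) else 0) < top" for f J \<sigma>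
    using that BLpH_norm_infinity_low_modes_le[OF p1, of M lam \<sigma> J f] low_modes_in_LpH[of f M lam p "-2" J]
    by (auto simp: mem_BLpH_iff intro: le_less_trans)
  ultimately show ?thesis by (simp add: cutoffs_bounded_def BLpH_sp_def)
qed

lemma zero_in_LpH: "(\<lambda>w k. 0) \<in> LpH M lam p \<sigma>"
  by (simp add: mem_LpH_iff coeff_measurable_zero LpH_norm_zero[OF p1])

lemma zero_in_BLpH_infinity: "(\<lambda>w k. 0) \<in> BLpH M lam \<infinity> p \<sigma>"
proof -
  have zero: "Pi_dy j (\<lambda>w k. 0) = (\<lambda>w k. 0)" for j :: nat by (simp add: Pi_dy_def)
  show ?thesis
    by (simp add: mem_BLpH_iff zero_in_LpH BLpH_norm_infinity zero LpH_norm_zero[OF p1])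
qed

theorem interpolation_identities:
  "equiv_spaces (BLpH_sp M lam q p s_theta) (interp_space a (LpH_sp M lam p s0) (LpH_sp M lam p s1) \<theta> q)"
  "equiv_spaces (interp_space a (BLpH_sp M lam \<infinity> p s0) (BLpH_sp M lam \<infinity> p s1) \<theta> q) (BLpH_sp M lam q p s_theta)"
proof -
  have s1_ge: "-2 \<le> s1" using s0_ge s0_less_s1 by simp
  have BLpH_subset: "BLpH M lam r p \<sigma> \<subseteq> LpH M lam p (-2)" for r \<sigma> by (auto simp: mem_BLpH_iff)
  show "equiv_spaces (BLpH_sp M lam q p s_theta) (interp_space a (LpH_sp M lam p s0) (LpH_sp M lam p s1) \<theta> q)"
    by (rule equiv_spaces_BLpH_interp_space[OF block_bounded_LpH _ _ block_bounded_LpH _ _ cutoffs_bounded_LpH])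
       (simp_all only: LpH_sp_def fst_conv LpH_subset_LpH_minus_2[OF s0_ge] LpH_subset_LpH_minus_2[OF s1_ge]
         BLpH_subset_LpH_s0 zero_in_LpH)
  show "equiv_spaces (interp_space a (BLpH_sp M lam \<infinity> p s0) (BLpH_sp M lam \<infinity> p s1) \<theta> q) (BLpH_sp M lam q p s_theta)"
    by (rule equiv_spaces_sym, rule equiv_spaces_BLpH_interp_space[OF block_bounded_BLpH_infinity _ _
          block_bounded_BLpH_infinity _ _ cutoffs_bounded_BLpH_infinity])
       (simp_all only: BLpH_sp_def fst_conv BLpH_subset BLpH_subset_BLpH_infinity_s0 zero_in_BLpH_infinity)
qed

end

theorem lemma3p3:
  fixes M :: "'w measure" and lam :: "nat \<Rightarrow> real" and d :: nat
    and p q :: ennreal and \<theta> s0 s1 a :: real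
  assumes "prob_space M"
    and "dirichlet_eigenvalues d lam"
    and "1 \<le> p" and "1 \<le> q"
    and "0 < \<theta>" and "\<theta> < 1"
    and "-2 \<le> s0" and "s0 < s1" and "s1 \<le> 2"
    and "1 < a"
  shows "equiv_spaces (BLpH_sp M lam q p ((1 - \<theta>) * s0 + \<theta> * s1))
           (interp_space a (LpH_sp M lam p s0) (LpH_sp M lam p s1) \<theta> q)
       \<and> equiv_spaces (interp_space a (BLpH_sp M lam \<infinity> p s0) (BLpH_sp M lam \<infinity> p s1) \<theta> q)
           (BLpH_sp M lam q p ((1 - \<theta>) * s0 + \<theta> * s1))"
proof -
  from assms(2) obtain c C where "1 \<le> d" "0 < lam 1" "\<forall>k\<ge>1. lam k \<le> lam (Suc k)" "0 < c" "0 < C"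
    "\<forall>k\<ge>1. c * real k powr (2 / real d) \<le> lam k \<and> lam k \<le> C * real k powr (2 / real d)"
    unfolding dirichlet_eigenvalues_def by blast
  then interpret interpolation_setting lam d c C M p q \<theta> s0 s1 a
    using assms by unfold_locales auto
  show ?thesis using interpolation_identities unfolding s_theta_def by blast
qed

end
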